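(* Let $D>0$ and suppose $A-((\kappa+1)I+\kappa M)D-I\gamma>0$. Let $\mu\in\mathcal{C}([0,\infty);\mathcal{P}_2^\nu(\mathbb{R}^2))$ be a global measure-valued solution of $\partial_t\mu+\partial_x(F[\mu]\mu)=0$ such that, for some $t_*>0$, $\operatorname{diam}_x(\operatorname{supp}\mu_t)\le D$ for all $t\in[0,t_*]$. Let $s_0:=x_c(0)$, $s_*:=x_c(t_* )$, let $\tau:[s_0,s_*]\to[0,t_*]$ be the inverse of the strictly increasing map $t\mapsto x_c(t)$ on $[0,t_*]$, and set $\tilde X(s,x,\omega):=X(\tau(s),x,\omega)$. Then for all $s\in(s_0,s_* )$ and all $(x,\omega),(x',\omega')\in\operatorname{supp}(\mu_0)$, with $t=\tau(s)$, $$\frac{d}{ds}\big(\tilde X(s,x,\omega)-\tilde X(s,x',\omega')\big)\le\frac{\partial_xF[\tilde\mu_t](x_c(t),\omega_c)}{F[\tilde\mu_t](x_c(t),\omega_c)}\big(\tilde X(s,x,\omega)-\tilde X(s,x',\omega')\big)+C_2(\kappa,\gamma,D).$$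
   Context: $\nu$ is a Borel probability measure on $\mathbb{R}$ with finite second moment and bounded support $\Omega$; $\gamma:=\sup_{\omega,\omega'\in\Omega}|\omega-\omega'|$, $\omega_c:=\int\omega\,\nu(d\omega)$. $\mathcal{P}_2^\nu(\mathbb{R}^2)$: Borel probability measures on $\mathbb{R}^2$ with finite second moment and $\omega$-marginal $\nu$. $W_1$: 1-Wasserstein distance. $\operatorname{diam}_x(\operatorname{supp}\mu):=\sup\{|x-x'|:(x,\omega),(x',\omega')\in\operatorname{supp}\mu\}$. $F$ assigns to each $\mu\in\mathcal{P}_2^\nu(\mathbb{R}^2)$ a function $F[\mu]:\mathbb{R}^2\to\mathbb{R}$; $\partial_x,\partial_\omega$ are partial derivatives in the spatial arguments with $\mu$ fixed. With constants $A,B,I,M,\kappa>0$: (A1) $\sup_{(x,\omega)\in\mathbb{R}\times\Omega}|\partial_x^\alpha F[\mu](x,\omega)-\partial_x^\alpha F[\mu'](x,\omega)|\le\kappa MW_1(\mu,\mu')$ for $\alpha=0,1$; (A2) $F[\mu]\in C^2(\mathbb{R}^2)$, $\|\partial_xF[\mu]\|_\infty\le\kappa I$, $\|\partial_x^2F[\mu]\|_\infty\le\kappa I$, $\|\partial_\omega F[\mu]\|_\infty\le I$; (A3) $F[(\tau_{2\pi})_\sharp\mu](x+2\pi,\omega)=F[\mu](x,\omega)$ with $\tau_{2\pi}(x,\omega)=(x+2\pi,\omega)$; (A4) $\inf_xF[\delta_x\otimes\nu](x,\omega_c)\ge A$; (A5) $\int_0^{2\pi}\frac{\partial_xF[\delta_x\otimes\nu](x,\omega_c)}{F[\delta_x\otimes\nu](x,\omega_c)}dx\le-\kappa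 B$. A global measure-valued solution with initial datum $\mu_0\in\mathcal{P}_2^\nu(\mathbb{R}^2)$ is $\mu\in\mathcal{C}([0,\infty);\mathcal{P}_2(\mathbb{R}^2))$ (with $\omega$-marginal $\nu$) such that $t\mapsto\int\varphi d\mu_t$ is continuous for $\varphi\in\mathcal{C}_0(\mathbb{R}^2)$ and $\int\varphi(t)d\mu_t=\int\varphi(0)d\mu_0+\int_0^t\int(\partial_s\varphi+F[\mu_s]\partial_x\varphi)d\mu_sds$ for all $\varphi\in\mathcal{C}^1_0([0,\infty)\times\mathbb{R}^2)$. Characteristic flow: $\frac{d}{dt}X(t,x,\omega)=F[\mu_t](X(t,x,\omega),\omega)$, $X(0,x,\omega)=x$. $x_c(t):=\int x\,\mu_t(dx,d\omega)$, $\tilde\mu_t:=\delta_{x_c(t)}\otimes\nu$. $C_1:=\kappa(M+I)D^2+2I\gamma$, $C_2(\kappa,\gamma,D):=\frac{C_1}{A}+\frac{(((\kappa+1)I+\kappa M)D+I\gamma)(\kappa ID+C_1)}{A(A-((\kappa+1)I+\kappa M)D-I\gamma)}$. *)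

theory Defs
  imports "HOL-Analysis.Analysis" "HOL-Probability.Probability"
begin

definition msupp :: "'a::metric_space measure \<Rightarrow> 'a set" where
  "msupp M = {z. \<forall>e>0. emeasure M (ball z e) \<noteq> 0}"

(* P_2^nu(R^2): Borel probability measures on R^2, finite second moment, omega-marginal nu *)
definition P2nu :: "real measure \<Rightarrow> (real \<times> real) measure \<Rightarrow> bool" where
  "P2nu \<nu> \<mu> \<longleftrightarrow> sets \<mu> = sets borel \<and> prob_space \<mu>
     \<and> integrable \<mu> (\<lambda>(x,w). x\<^sup>2 + w\<^sup>2) \<and> distr \<mu> borel snd = \<nu>"

definition couplings :: "'a::metric_space measure \<Rightarrow> 'a measure \<Rightarrow> ('a \<times> 'a) measure set" where
  "couplings \<mu> \<mu>' = {\<pi>. sets \<pi> = sets borel \<and> distr \<pi> borel fst = \<mu> \<and> distr \<pi> borel snd = \<mu>'}"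

definition W1 :: "'a::metric_space measure \<Rightarrow> 'a measure \<Rightarrow> ennreal" where
  "W1 \<mu> \<mu>' = (INF \<pi>\<in>couplings \<mu> \<mu>'. \<integral>\<^sup>+ p. ennreal (dist (fst p) (snd p)) \<partial>\<pi>)"

definition W2sq :: "'a::metric_space measure \<Rightarrow> 'a measure \<Rightarrow> ennreal" where
  "W2sq \<mu> \<mu>' = (INF \<pi>\<in>couplings \<mu> \<mu>'. \<integral>\<^sup>+ p. ennreal ((dist (fst p) (snd p))\<^sup>2) \<partial>\<pi>)"

definition Fx :: "('m \<Rightarrow> real \<Rightarrow> real \<Rightarrow> real) \<Rightarrow> 'm \<Rightarrow> real \<Rightarrow> real \<Rightarrow> real" where
  "Fx F \<mu> x w = deriv (\<lambda>y. F \<mu> y w) x"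

definition Fxx :: "('m \<Rightarrow> real \<Rightarrow> real \<Rightarrow> real) \<Rightarrow> 'm \<Rightarrow> real \<Rightarrow> real \<Rightarrow> real" where
  "Fxx F \<mu> x w = deriv (\<lambda>y. Fx F \<mu> y w) x"

definition Fw :: "('m \<Rightarrow> real \<Rightarrow> real \<Rightarrow> real) \<Rightarrow> 'm \<Rightarrow> real \<Rightarrow> real \<Rightarrow> real" where
  "Fw F \<mu> x w = deriv (\<lambda>v. F \<mu> x v) w"

definition C2_R2 :: "(real \<Rightarrow> real \<Rightarrow> real) \<Rightarrow> bool" where
  "C2_R2 f \<longleftrightarrow> (\<exists>f1 f2 f11 f12 f21 f22.
     (\<forall>x w. ((\<lambda>y. f y w) has_real_derivative f1 x w) (at x)
          \<and> ((\<lambda>v. f x v) has_real_derivative f2 x w) (at w)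
          \<and> ((\<lambda>y. f1 y w) has_real_derivative f11 x w) (at x)
          \<and> ((\<lambda>v. f1 x v) has_real_derivative f12 x w) (at w)
          \<and> ((\<lambda>y. f2 y w) has_real_derivative f21 x w) (at x)
          \<and> ((\<lambda>v. f2 x v) has_real_derivative f22 x w) (at w))
     \<and> continuous_on UNIV (\<lambda>(x,w). f x w)
     \<and> continuous_on UNIV (\<lambda>(x,w). f1 x w) \<and> continuous_on UNIV (\<lambda>(x,w). f2 x w)
     \<and> continuous_on UNIV (\<lambda>(x,w). f11 x w) \<and> continuous_on UNIV (\<lambda>(x,w). f12 x w)
     \<and> continuous_on UNIV (\<lambda>(x,w). f21 x w) \<and> continuous_on UNIV (\<lambda>(x,w). f22 x w))"

definition test_fun :: "(real \<Rightarrow> real \<Rightarrow> real \<Rightarrow> real) \<Rightarrow> (real \<Rightarrow> real \<Rightarrow> real \<Rightarrow> real)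
    \<Rightarrow> (real \<Rightarrow> real \<Rightarrow> real \<Rightarrow> real) \<Rightarrow> bool" where
  "test_fun \<phi> \<phi>t \<phi>x \<longleftrightarrow> (\<exists>\<phi>w.
     (\<forall>t\<ge>0. \<forall>x w. ((\<lambda>s. \<phi> s x w) has_real_derivative \<phi>t t x w) (at t within {0..})
          \<and> ((\<lambda>y. \<phi> t y w) has_real_derivative \<phi>x t x w) (at x)
          \<and> ((\<lambda>v. \<phi> t x v) has_real_derivative \<phi>w t x w) (at w))
     \<and> continuous_on ({0..} \<times> UNIV) (\<lambda>(t,x,w). \<phi> t x w)
     \<and> continuous_on ({0..} \<times> UNIV) (\<lambda>(t,x,w). \<phi>t t x w)
     \<and> continuous_on ({0..} \<times> UNIV) (\<lambda>(t,x,w). \<phi>x t x w)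
     \<and> continuous_on ({0..} \<times> UNIV) (\<lambda>(t,x,w). \<phi>w t x w)
     \<and> (\<exists>R. \<forall>t x w. R \<le> t \<or> R \<le> \<bar>x\<bar> \<or> R \<le> \<bar>w\<bar> \<longrightarrow> \<phi> t x w = 0))"

definition mv_solution :: "real measure \<Rightarrow> ((real \<times> real) measure \<Rightarrow> real \<Rightarrow> real \<Rightarrow> real)
    \<Rightarrow> (real \<Rightarrow> (real \<times> real) measure) \<Rightarrow> bool" where
  "mv_solution \<nu> F \<mu> \<longleftrightarrow>
     (\<forall>t\<ge>0. P2nu \<nu> (\<mu> t))
   \<and> (\<forall>t\<ge>0. ((\<lambda>s. W2sq (\<mu> s) (\<mu> t)) \<longlongrightarrow> 0) (at t within {0..}))
   \<and> (\<forall>f :: real \<times> real \<Rightarrow> real. continuous_on UNIV f \<and> (f \<longlongrightarrow> 0) at_infinity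
        \<longrightarrow> continuous_on {0..} (\<lambda>t. integral\<^sup>L (\<mu> t) f))
   \<and> (\<forall>\<phi> \<phi>t \<phi>x. test_fun \<phi> \<phi>t \<phi>x \<longrightarrow> (\<forall>t\<ge>0.
        integral\<^sup>L (\<mu> t) (\<lambda>(x,w). \<phi> t x w)
        = integral\<^sup>L (\<mu> 0) (\<lambda>(x,w). \<phi> 0 x w)
          + integral {0..t} (\<lambda>s. integral\<^sup>L (\<mu> s)
               (\<lambda>(x,w). \<phi>t s x w + F (\<mu> s) x w * \<phi>x s x w))))"

definition C1const :: "real \<Rightarrow> real \<Rightarrow> real \<Rightarrow> real \<Rightarrow> real \<Rightarrow> real" where
  "C1const \<kappa> M I \<gamma> D = \<kappa> * (M + I) * D\<^sup>2 + 2 * I * \<gamma>"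

definition C2const :: "real \<Rightarrow> real \<Rightarrow> real \<Rightarrow> real \<Rightarrow> real \<Rightarrow> real \<Rightarrow> real" where
  "C2const A \<kappa> M I \<gamma> D =
     C1const \<kappa> M I \<gamma> D / A
     + ((((\<kappa> + 1) * I + \<kappa> * M) * D + I * \<gamma>) * (\<kappa> * I * D + C1const \<kappa> M I \<gamma> D))
       / (A * (A - ((\<kappa> + 1) * I + \<kappa> * M) * D - I * \<gamma>))"

end

theory Submission
  imports Defs
begin

text \<open>The centre of mass \<open>x\<^sub>c\<close> moves with the mean velocity \<open>V(t) = \<integral> F[\<mu>\<^sub>t] d\<mu>\<^sub>t\<close>, as one sees
  by testing the weak formulation with a function equal to \<open>x\<close> on the (uniformly bounded) supports.
  Since \<open>supp \<mu>\<^sub>t\<close> has \<open>x\<close>-diameter at most \<open>D\<close>, \<open>W\<^sub>1(\<mu>\<^sub>t, \<delta>\<^bsub>x\<^sub>c\<^esub> \<otimes> \<nu>) \<le> D\<close>, so \<open>V(t)\<close> differs from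
  \<open>F[\<delta>\<^bsub>x\<^sub>c\<^esub> \<otimes> \<nu>](x\<^sub>c, \<omega>\<^sub>c) \<ge> A\<close> by at most \<open>E = ((\<kappa>+1)I + \<kappa>M)D + I\<gamma> < A\<close>: hence \<open>x\<^sub>c\<close> is strictly
  increasing and \<open>\<tau>' = 1/V\<close>. Characteristics issued from \<open>supp \<mu>\<^sub>0\<close> are shadowed by \<open>supp \<mu>\<^sub>t\<close> (the
  mass of a bump in a tube around the characteristic that widens exponentially cannot decrease), so
  they stay within \<open>D\<close> of \<open>x\<^sub>c\<close> and of each other. Comparing \<open>F[\<mu>\<^sub>t]\<close> with \<open>F[\<delta>\<^bsub>x\<^sub>c\<^esub> \<otimes> \<nu>]\<close> and
  linearising the latter at \<open>(x\<^sub>c, \<omega>\<^sub>c)\<close> bounds the relative velocity of two characteristics by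
  \<open>\<partial>\<^sub>xF[\<delta>\<^bsub>x\<^sub>c\<^esub> \<otimes> \<nu>](x\<^sub>c, \<omega>\<^sub>c)\<close> times their distance plus \<open>C\<^sub>1\<close>; dividing by \<open>V\<close> instead of
  \<open>F[\<delta>\<^bsub>x\<^sub>c\<^esub> \<otimes> \<nu>](x\<^sub>c, \<omega>\<^sub>c)\<close> turns \<open>C\<^sub>1/A\<close> into \<open>C\<^sub>2\<close>.\<close>

lemma AE_in_msupp:
  fixes M :: "'a::{metric_space,second_countable_topology} measure"
  assumes sets_M: "sets M = sets borel"
  shows "AE z in M. z \<in> msupp M"
proof -
  define \<B> where "\<B> = {ball z e | z e. e > 0 \<and> emeasure M (ball z e) = 0}"
  obtain \<B>' where \<B>': "\<B>' \<subseteq> \<B>" "countable \<B>'" "\<Union>\<B>' = \<Union>\<B>"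
    using Lindelof[of \<B>] unfolding \<B>_def by blast
  have "\<Union>\<B>' \<in> null_sets M"
  proof (rule null_sets_UN'[OF \<open>countable \<B>'\<close>, of "\<lambda>B. B", simplified])
    fix B assume "B \<in> \<B>'"
    then obtain z e where "B = ball z e" "emeasure M (ball z e) = 0"
      using \<B>' unfolding \<B>_def by auto
    then show "B \<in> null_sets M" using sets_M by auto
  qed
  moreover have "{z \<in> space M. z \<notin> msupp M} \<subseteq> \<Union>\<B>'"
  proof
    fix z assume "z \<in> {z \<in> space M. z \<notin> msupp M}"
    then obtain e where "e > 0" "emeasure M (ball z e) = 0" unfolding msupp_def by auto
    then show "z \<in> \<Union>\<B>'" using \<B>' unfolding \<B>_def by (auto intro!: exI[of _ "ball z e"])
  qed
  ultimately show ?thesis by (rule AE_I')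
qed

lemma msupp_nonempty:
  fixes M :: "'a::{metric_space,second_countable_topology} measure"
  assumes "sets M = sets borel" and "prob_space M"
  shows "msupp M \<noteq> {}"
  using AE_in_msupp[OF assms(1)] prob_space.AE_False[OF assms(2)] by auto

lemma measurable_continuous_sets_borel:
  fixes f :: "'a::topological_space \<Rightarrow> 'b::topological_space"
  assumes "sets M = sets borel" and "continuous_on UNIV f"
  shows "f \<in> borel_measurable M"
  unfolding measurable_cong_sets[OF assms(1) refl]
  by (rule borel_measurable_continuous_onI[OF assms(2)])

lemma P2nu_msupp_snd:
  assumes "P2nu \<nu> \<mu>" and "p \<in> msupp \<mu>"
  shows "snd p \<in> msupp \<nu>"
  unfolding msupp_def
proof (intro CollectI allI impI)
  fix e :: real assume "e > 0"
  have sets_\<mu>: "sets \<mu> = sets borel" and marginal: "distr \<mu> borel snd = \<nu>"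
    using assms(1) unfolding P2nu_def by auto
  have snd_meas: "snd \<in> \<mu> \<rightarrow>\<^sub>M borel"
    by (rule measurable_continuous_sets_borel[OF sets_\<mu>]) (intro continuous_intros)
  have "emeasure \<mu> (ball p e) \<le> emeasure \<mu> (snd -` ball (snd p) e \<inter> space \<mu>)"
  proof (rule emeasure_mono)
    show "ball p e \<subseteq> snd -` ball (snd p) e \<inter> space \<mu>"
      using sets_eq_imp_space_eq[OF sets_\<mu>]
      by (auto simp: dist_commute) (metis dist_commute dist_snd_le le_less_trans snd_conv)
  qed (use snd_meas in measurable)
  also have "\<dots> = emeasure \<nu> (ball (snd p) e)"
    unfolding marginal[symmetric] by (rule emeasure_distr[OF snd_meas, symmetric]) simp
  finally show "emeasure \<nu> (ball (snd p) e) \<noteq> 0"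
    using assms(2) \<open>e > 0\<close> unfolding msupp_def by (auto simp: le_zero_eq)
qed

lemma return_pair_measure_eq_distr:
  assumes sets_\<nu>: "sets \<nu> = sets borel" and "prob_space \<nu>"
  shows "return borel c \<Otimes>\<^sub>M \<nu> = distr \<nu> borel (\<lambda>w. (c::real, w::real))"
proof (rule pair_measure_eqI)
  show "sigma_finite_measure (return borel c)"
    by (simp add: prob_space_imp_sigma_finite prob_space_return)
  show "sigma_finite_measure \<nu>" using assms(2) by (simp add: prob_space_imp_sigma_finite)
  have meas: "(\<lambda>w. (c, w)) \<in> \<nu> \<rightarrow>\<^sub>M borel"
    by (rule measurable_continuous_sets_borel[OF sets_\<nu>]) (intro continuous_intros)
  have "sets (return borel c \<Otimes>\<^sub>M \<nu>) = sets (borel \<Otimes>\<^sub>M (borel::real measure))"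
    by (rule sets_pair_measure_cong) (simp_all add: sets_\<nu>)
  also have "\<dots> = sets (borel :: (real \<times> real) measure)" by (metis borel_prod)
  finally show "sets (return borel c \<Otimes>\<^sub>M \<nu>) = sets (distr \<nu> borel (\<lambda>w. (c, w)))"
    by simp
  fix A B assume A: "A \<in> sets (return borel c)" and B: "B \<in> sets \<nu>"
  have "A \<times> B \<in> sets (borel :: (real \<times> real) measure)"
    using A B sets_\<nu> borel_prod[where 'a=real and 'b=real] by (metis pair_measureI sets_return)
  then have "emeasure (distr \<nu> borel (\<lambda>w. (c, w))) (A \<times> B)
      = emeasure \<nu> ((\<lambda>w. (c, w)) -` (A \<times> B) \<inter> space \<nu>)"
    by (rule emeasure_distr[OF meas])
  also have "\<dots> = emeasure (return borel c) A * emeasure \<nu> B"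
    using A B sets.sets_into_space[OF B] by (auto simp: emeasure_return intro!: arg_cong[where f="emeasure \<nu>"])
  finally show "emeasure (return borel c) A * emeasure \<nu> B = emeasure (distr \<nu> borel (\<lambda>w. (c, w))) (A \<times> B)"
    by simp
qed

lemma P2nu_return_pair:
  assumes sets_\<nu>: "sets \<nu> = sets borel" and prob: "prob_space \<nu>"
    and second_moment: "integrable \<nu> (\<lambda>w. w\<^sup>2)"
  shows "P2nu \<nu> (return borel (c::real) \<Otimes>\<^sub>M \<nu>)"
proof -
  have meas: "(\<lambda>w. (c, w)) \<in> \<nu> \<rightarrow>\<^sub>M borel"
    by (rule measurable_continuous_sets_borel[OF sets_\<nu>]) (intro continuous_intros)
  have "integrable (distr \<nu> borel (\<lambda>w. (c, w))) (\<lambda>(x,w). x\<^sup>2 + w\<^sup>2)"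
    using second_moment prob_space.finite_measure[OF prob]
    by (subst integrable_distr_eq[OF meas])
       (auto simp: case_prod_beta intro!: Bochner_Integration.integrable_add finite_measure.integrable_const
             borel_measurable_continuous_onI continuous_intros)
  moreover have "distr (distr \<nu> borel (\<lambda>w. (c, w))) borel snd = \<nu>"
    using distr_id2[OF sets_\<nu>[symmetric]]
    by (subst distr_distr[OF _ meas]) (auto simp: comp_def intro!: borel_measurable_continuous_onI continuous_intros)
  ultimately show ?thesis
    unfolding return_pair_measure_eq_distr[OF sets_\<nu> prob] P2nu_def
    using prob_space.prob_space_distr[OF prob meas] by simp
qed

lemma abs_integral_le_AE:
  fixes f :: "'a \<Rightarrow> real"
  assumes "prob_space M" and bound: "AE x in M. \<bar>f x\<bar> \<le> B"
  shows "\<bar>integral\<^sup>L M f\<bar> \<le> B"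
proof -
  interpret prob_space M by fact
  have "0 \<le> B"
  proof (rule ccontr)
    assume "\<not> 0 \<le> B"
    from bound have "AE x in M. False" by eventually_elim (use \<open>\<not> 0 \<le> B\<close> in arith)
    then show False by simp
  qed
  show ?thesis
  proof (cases "integrable M f")
    case True
    have "\<bar>integral\<^sup>L M f\<bar> \<le> integral\<^sup>L M (\<lambda>x. \<bar>f x\<bar>)" by (rule integral_abs_bound)
    also have "\<dots> \<le> B" using True bound by (intro integral_le_const) auto
    finally show ?thesis .
  qed (use \<open>0 \<le> B\<close> in \<open>simp add: not_integrable_integral_eq\<close>)
qed

lemma integrable_bounded_continuous:
  fixes f :: "'a::topological_space \<Rightarrow> real"
  assumes "prob_space M" and "sets M = sets borel" and "continuous_on UNIV f"
    and "AE x in M. \<bar>f x\<bar> \<le> B"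
  shows "integrable M f"
  using assms measurable_continuous_sets_borel[OF assms(2,3)]
  by (intro finite_measure.integrable_const_bound[where B=B]) (auto simp: prob_space_def)

lemma emeasure_space_coupling:
  fixes \<mu>1 \<mu>2 :: "'a::{metric_space,second_countable_topology} measure"
  assumes "\<pi> \<in> couplings \<mu>1 \<mu>2" and "prob_space \<mu>1"
  shows "emeasure \<pi> (space \<pi>) = 1"
proof -
  have sets_\<pi>: "sets \<pi> = sets borel" and marginal: "distr \<pi> borel fst = \<mu>1"
    using assms(1) unfolding couplings_def by auto
  have fst_meas: "fst \<in> \<pi> \<rightarrow>\<^sub>M borel"
    by (rule measurable_continuous_sets_borel[OF sets_\<pi>]) (intro continuous_intros)
  have "1 = emeasure \<mu>1 (space \<mu>1)" using assms(2) by (simp add: prob_space.emeasure_space_1)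
  also have "\<dots> = emeasure \<pi> (fst -` space \<mu>1 \<inter> space \<pi>)"
    unfolding marginal[symmetric] by (subst emeasure_distr[OF fst_meas]) auto
  also have "fst -` space \<mu>1 \<inter> space \<pi> = space \<pi>"
    unfolding marginal[symmetric] by auto
  finally show ?thesis by simp
qed

lemma W1_le_of_W2sq_less:
  fixes \<mu>1 \<mu>2 :: "'a::{metric_space,second_countable_topology} measure"
  assumes W2: "W2sq \<mu>1 \<mu>2 < ennreal (e\<^sup>2)" and "e > 0" and "prob_space \<mu>1"
  shows "W1 \<mu>1 \<mu>2 \<le> ennreal e"
proof -
  let ?d = "\<lambda>p. dist (fst p) (snd p)"
  obtain \<pi> where \<pi>: "\<pi> \<in> couplings \<mu>1 \<mu>2" and cost: "(\<integral>\<^sup>+ p. ennreal ((?d p)\<^sup>2) \<partial>\<pi>) < ennreal (e\<^sup>2)"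
    using W2 unfolding W2sq_def by (auto simp: INF_less_iff)
  have sets_\<pi>: "sets \<pi> = sets borel" using \<pi> unfolding couplings_def by auto
  have meas: "(\<lambda>p. ennreal ((?d p)\<^sup>2)) \<in> borel_measurable \<pi>"
    by (intro measurable_compose[OF _ measurable_ennreal] measurable_continuous_sets_borel[OF sets_\<pi>]
        continuous_intros)
  \<comment> \<open>\<open>d \<le> d\<^sup>2/(2e) + e/2\<close> (AM-GM), integrated against the coupling \<open>\<pi>\<close>\<close>
  have young: "ennreal (?d p) \<le> ennreal (1/(2*e)) * ennreal ((?d p)\<^sup>2) + ennreal (e/2)" for p
  proof -
    have "?d p \<le> 1/(2*e) * (?d p)\<^sup>2 + e/2"
      using \<open>e > 0\<close> sum_power2_ge_zero[of "?d p - e" 0] by (simp add: field_simps power2_eq_square)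
    then show ?thesis
      using \<open>e > 0\<close> by (simp add: ennreal_plus[symmetric] ennreal_mult[symmetric] ennreal_leI del: ennreal_plus)
  qed
  have "W1 \<mu>1 \<mu>2 \<le> (\<integral>\<^sup>+ p. ennreal (?d p) \<partial>\<pi>)"
    unfolding W1_def by (rule INF_lower[OF \<pi>])
  also have "\<dots> \<le> (\<integral>\<^sup>+ p. ennreal (1/(2*e)) * ennreal ((?d p)\<^sup>2) + ennreal (e/2) \<partial>\<pi>)"
    by (intro nn_integral_mono young)
  also have "\<dots> = ennreal (1/(2*e)) * (\<integral>\<^sup>+ p. ennreal ((?d p)\<^sup>2) \<partial>\<pi>) + ennreal (e/2)"
    using meas emeasure_space_coupling[OF \<pi> assms(3)] by (subst nn_integral_add) (auto simp: nn_integral_cmult)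
  also have "\<dots> \<le> ennreal (1/(2*e)) * ennreal (e\<^sup>2) + ennreal (e/2)"
    using cost by (intro add_right_mono mult_left_mono) auto
  also have "\<dots> = ennreal e"
    using \<open>e > 0\<close> by (simp add: ennreal_mult[symmetric] ennreal_plus[symmetric] power2_eq_square del: ennreal_plus)
  finally show ?thesis .
qed

lemma integral_pos_if_pos_on_msupp:
  fixes g :: "'a::{metric_space,second_countable_topology} \<Rightarrow> real"
  assumes "prob_space M" and sets_M: "sets M = sets borel" and "continuous_on UNIV g"
    and "\<And>p. 0 \<le> g p" and "\<And>p. g p \<le> B" and "z \<in> msupp M" and "0 < g z"
  shows "0 < integral\<^sup>L M g"
proof -
  interpret prob_space M by fact
  obtain r where "r > 0" and near: "\<And>p. dist p z < r \<Longrightarrow> dist (g p) (g z) < g z / 2"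
    using \<open>continuous_on UNIV g\<close> \<open>0 < g z\<close> unfolding continuous_on_iff
    by (metis UNIV_I half_gt_zero)
  have ball_meas: "ball z r \<in> sets M" using sets_M by simp
  have "emeasure M (ball z r) \<noteq> 0" using \<open>z \<in> msupp M\<close> \<open>r > 0\<close> unfolding msupp_def by auto
  then have "0 < measure M (ball z r)" by (simp add: emeasure_eq_measure zero_less_measure_iff)
  then have "0 < g z / 2 * measure M (ball z r)" using \<open>0 < g z\<close> by simp
  also have "\<dots> = integral\<^sup>L M (\<lambda>p. g z / 2 * indicator (ball z r) p)"
    using ball_meas by simp
  also have "\<dots> \<le> integral\<^sup>L M g"
  proof (rule integral_mono)
    show "integrable M (\<lambda>p. g z / 2 * indicator (ball z r) p :: real)"
      using ball_meas by (intro integrable_mult_right integrable_real_indicator) (auto simp: less_top[symmetric])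
    show "integrable M g"
      using assms(3-5) by (intro integrable_bounded_continuous[OF \<open>prob_space M\<close> sets_M, where B=B])
         (auto intro: order.trans[OF _ assms(5)])
    show "g z / 2 * indicator (ball z r) p \<le> g p" for p
    proof (cases "p \<in> ball z r")
      case True
      then have "dist (g p) (g z) < g z / 2" using near[of p] by (simp add: dist_commute)
      then show ?thesis using True unfolding dist_real_def by (simp; arith)
    qed (use assms(4) in simp)
  qed
  finally show ?thesis .
qed

lemma msupp_nonzero_if_integral_nonzero:
  fixes g :: "'a::{metric_space,second_countable_topology} \<Rightarrow> real"
  assumes "prob_space M" and "sets M = sets borel" and "integral\<^sup>L M g \<noteq> 0"
  obtains q where "q \<in> msupp M" and "g q \<noteq> 0"
proof (rule ccontr)
  assume "\<not> thesis"
  then have "AE p in M. \<bar>g p\<bar> \<le> 0" using AE_in_msupp[OF assms(2)] that by (auto elim: AE_mp)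
  then show False using abs_integral_le_AE[OF assms(1)] assms(3) by fastforce
qed

lemma real_le_if_ennreal_le_mult:
  assumes "ennreal a \<le> ennreal c * W" and "W \<le> ennreal e" and "0 \<le> c" and "0 \<le> e"
  shows "a \<le> c * e"
proof -
  have "ennreal a \<le> ennreal (c * e)"
    using order.trans[OF assms(1) mult_left_mono[OF assms(2)]] assms(3,4) by (simp add: ennreal_mult)
  then show ?thesis using assms(3,4) by (simp add: ennreal_le_iff)
qed

lemma collapse_in_couplings:
  assumes "P2nu \<nu> \<mu>" and sets_\<nu>: "sets \<nu> = sets borel" and "prob_space \<nu>"
  shows "distr \<mu> borel (\<lambda>p. (p, (c, snd p))) \<in> couplings \<mu> (return borel c \<Otimes>\<^sub>M \<nu>)"
proof -
  have sets_\<mu>: "sets \<mu> = sets borel" and marginal: "distr \<mu> borel snd = \<nu>"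
    using assms(1) unfolding P2nu_def by auto
  have meas: "(\<lambda>p. (p, (c, snd p))) \<in> \<mu> \<rightarrow>\<^sub>M borel"
    by (rule measurable_continuous_sets_borel[OF sets_\<mu>]) (intro continuous_intros)
  have cont_meas: "h \<in> borel_measurable borel" if "continuous_on UNIV h" for h :: "_ \<Rightarrow> real \<times> real"
    using that by (rule borel_measurable_continuous_onI)
  have "distr (distr \<mu> borel (\<lambda>p. (p, (c, snd p)))) borel fst = \<mu>"
    by (subst distr_distr[OF _ meas]) (auto simp: comp_def distr_id2[OF sets_\<mu>[symmetric]]
        intro!: cont_meas continuous_intros)
  moreover have "distr (distr \<mu> borel (\<lambda>p. (p, (c, snd p)))) borel snd = distr \<mu> borel (\<lambda>p. (c, snd p))"
    by (subst distr_distr[OF _ meas]) (auto simp: comp_def intro!: cont_meas continuous_intros)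
  moreover have "\<dots> = distr (distr \<mu> borel snd) borel (\<lambda>w. (c, w))"
    by (subst distr_distr) (auto simp: comp_def intro!: cont_meas continuous_intros
        measurable_continuous_sets_borel[OF sets_\<mu>])
  ultimately show ?thesis
    unfolding couplings_def marginal return_pair_measure_eq_distr[OF sets_\<nu> assms(3)] by simp
qed

lemma quotient_perturbation_bound:
  fixes N b \<Delta> V a A E C L D :: real
  assumes "V > 0" and "a \<ge> A" and "A > E" and "E \<ge> 0"
    and "\<bar>V - a\<bar> \<le> E" and "\<bar>b\<bar> \<le> L" and "\<bar>\<Delta>\<bar> \<le> D" and "N - b * \<Delta> \<le> C"
    and "C \<ge> 0" and "L \<ge> 0" and "D \<ge> 0"
  shows "N / V \<le> b / a * \<Delta> + (C / A + E * (L * D + C) / (A * (A - E)))"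
proof -
  have "a > 0" and "V \<ge> A - E" and "A - E > 0" using assms by auto
  have split: "N / V - b / a * \<Delta> = (N - b * \<Delta>) / V + b * \<Delta> * (a - V) / (a * V)"
    using \<open>V > 0\<close> \<open>a > 0\<close> by (simp add: field_simps)
  have "(N - b * \<Delta>) / V \<le> C / V" using assms(1,8) by (simp add: divide_right_mono)
  also have "\<dots> \<le> C / (A - E)"
    using \<open>C \<ge> 0\<close> \<open>A - E > 0\<close> \<open>V \<ge> A - E\<close> by (intro divide_left_mono) auto
  also have "\<dots> = C / A + C * E / (A * (A - E))"
    using \<open>A - E > 0\<close> assms(3,4) by (simp add: field_simps)
  finally have first: "(N - b * \<Delta>) / V \<le> C / A + C * E / (A * (A - E))" .
  have "b * \<Delta> * (a - V) \<le> \<bar>b\<bar> * \<bar>\<Delta>\<bar> * \<bar>a - V\<bar>" by (simp add: abs_mult[symmetric])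
  also have "\<dots> \<le> L * D * E"
    using assms(5-7) by (intro mult_mono) (auto simp: abs_minus_commute)
  finally have "b * \<Delta> * (a - V) / (a * V) \<le> L * D * E / (a * V)"
    using \<open>a > 0\<close> \<open>V > 0\<close> by (simp add: divide_right_mono)
  also have "\<dots> \<le> L * D * E / (A * (A - E))"
    using assms \<open>A - E > 0\<close> \<open>V \<ge> A - E\<close>
    by (intro divide_left_mono mult_mono mult_pos_pos mult_nonneg_nonneg) auto
  finally have second: "b * \<Delta> * (a - V) / (a * V) \<le> L * D * E / (A * (A - E))" .
  have "E * (L * D + C) / (A * (A - E)) = L * D * E / (A * (A - E)) + C * E / (A * (A - E))"
    by (simp add: add_divide_distrib algebra_simps)
  then show ?thesis using split first second by linarith
qed

section \<open>A \<open>C\<^sup>1\<close> step function and test functions\<close>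

definition pos_sq :: "real \<Rightarrow> real" where
  "pos_sq z = (max 0 z)\<^sup>2"

lemma has_real_derivative_pos_sq: "(pos_sq has_real_derivative 2 * max 0 z) (at z)"
proof -
  consider "z > 0" | "z < 0" | "z = 0" by linarith
  then show ?thesis
  proof cases
    case 1
    have "((\<lambda>y. y\<^sup>2) has_real_derivative 2 * max 0 z) (at z)"
      using 1 by (auto intro!: derivative_eq_intros)
    then show ?thesis
      by (rule has_field_derivative_transform_within_open[where S="{0<..}"])
         (use 1 in \<open>auto simp: pos_sq_def\<close>)
  next
    case 2
    have "((\<lambda>y. 0) has_real_derivative 2 * max 0 z) (at z)" using 2 by simp
    then show ?thesis
      by (rule has_field_derivative_transform_within_open[where S="{..<0}"])
         (use 2 in \<open>auto simp: pos_sq_def\<close>)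
  next
    case 3
    have "((\<lambda>h. (pos_sq (z + h) - pos_sq z) / h) \<longlongrightarrow> 0) (at 0)"
    proof (rule Lim_null_comparison)
      have "norm ((pos_sq (z + h) - pos_sq z) / h) \<le> \<bar>h\<bar>" for h
        using 3 by (cases "h \<le> 0") (auto simp: pos_sq_def power2_eq_square)
      then show "\<forall>\<^sub>F h in at 0. norm ((pos_sq (z + h) - pos_sq z) / h) \<le> \<bar>h\<bar>"
        by (simp add: always_eventually)
      show "((\<lambda>h. \<bar>h\<bar>) \<longlongrightarrow> 0) (at (0::real))"
        using tendsto_rabs[OF tendsto_ident_at[of "0::real" UNIV]] by simp
    qed
    then show ?thesis using 3 by (simp add: has_field_derivative_iff)
  qed
qed

definition smooth_step :: "real \<Rightarrow> real" where
  "smooth_step z = 2 * pos_sq z - 4 * pos_sq (z - 1/2) + 2 * pos_sq (z - 1)"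

definition smooth_step' :: "real \<Rightarrow> real" where
  "smooth_step' z = 4 * max 0 z - 8 * max 0 (z - 1/2) + 4 * max 0 (z - 1)"

lemma has_real_derivative_smooth_step: "(smooth_step has_real_derivative smooth_step' z) (at z)"
proof -
  have shifted: "((\<lambda>x. pos_sq (x - c)) has_real_derivative 2 * max 0 (z - c) * 1) (at z)" for c
    by (rule DERIV_chain2[OF has_real_derivative_pos_sq]) (auto intro!: derivative_eq_intros)
  have "((\<lambda>z. 2 * pos_sq z - 4 * pos_sq (z - 1/2) + 2 * pos_sq (z - 1)) has_real_derivative
        2 * (2 * max 0 z) - 4 * (2 * max 0 (z - 1/2) * 1) + 2 * (2 * max 0 (z - 1) * 1)) (at z)"
    by (intro DERIV_add DERIV_diff DERIV_cmult has_real_derivative_pos_sq shifted)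
  then show ?thesis unfolding smooth_step_def[abs_def] smooth_step'_def by simp
qed

lemma smooth_step_has_derivative_chain [derivative_intros]:
  "(g has_real_derivative g') (at x within s) \<Longrightarrow> D = smooth_step' (g x) * g' \<Longrightarrow>
   ((\<lambda>x. smooth_step (g x)) has_real_derivative D) (at x within s)"
  using DERIV_chain2[OF has_real_derivative_smooth_step] by blast

lemma continuous_on_smooth_step [continuous_intros]:
  "continuous_on A g \<Longrightarrow> continuous_on A (\<lambda>x. smooth_step (g x))"
  unfolding smooth_step_def pos_sq_def by (intro continuous_intros)

lemma continuous_on_smooth_step' [continuous_intros]:
  "continuous_on A g \<Longrightarrow> continuous_on A (\<lambda>x. smooth_step' (g x))"
  unfolding smooth_step'_def by (intro continuous_intros)

lemma smooth_step_nonpos: "z \<le> 0 \<Longrightarrow> smooth_step z = 0"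
  unfolding smooth_step_def pos_sq_def by auto

lemma smooth_step_ge_1: "z \<ge> 1 \<Longrightarrow> smooth_step z = 1"
  unfolding smooth_step_def pos_sq_def by (auto simp: power2_eq_square algebra_simps)

lemma smooth_step'_nonpos: "z \<le> 0 \<Longrightarrow> smooth_step' z = 0"
  unfolding smooth_step'_def by auto

lemma smooth_step'_ge_1: "z \<ge> 1 \<Longrightarrow> smooth_step' z = 0"
  unfolding smooth_step'_def by auto

lemma smooth_step'_nonneg: "smooth_step' z \<ge> 0"
  unfolding smooth_step'_def by (auto simp: max_def)

lemma smooth_step_bounds: "0 \<le> smooth_step z \<and> smooth_step z \<le> 1"
proof -
  consider "z \<le> 0" | "0 \<le> z \<and> z \<le> 1/2" | "1/2 \<le> z \<and> z \<le> 1" | "z \<ge> 1" by linarith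
  then show ?thesis
  proof cases
    case 2
    then have "smooth_step z = 2 * z\<^sup>2" unfolding smooth_step_def pos_sq_def by (auto simp: max_def)
    moreover have "z * z \<le> 1/2 * (1/2)" using 2 by (intro mult_mono) auto
    ultimately show ?thesis by (simp add: power2_eq_square)
  next
    case 3
    then have "smooth_step z = 1 - 2 * (1 - z)\<^sup>2"
      unfolding smooth_step_def pos_sq_def by (auto simp: max_def power2_eq_square algebra_simps)
    moreover have "(1 - z) * (1 - z) \<le> 1/2 * (1/2)" using 3 by (intro mult_mono) auto
    ultimately show ?thesis by (simp add: power2_eq_square)
  qed (auto simp: smooth_step_nonpos smooth_step_ge_1)
qed

definition track_gauge :: "real \<Rightarrow> real \<Rightarrow> (real \<Rightarrow> real) \<Rightarrow> real \<Rightarrow> real \<Rightarrow> real" where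
  "track_gauge K \<delta> Y t y = exp (-2*K*t) * (y - Y t)\<^sup>2 / \<delta>\<^sup>2"

definition track_gauge_dt ::
    "real \<Rightarrow> real \<Rightarrow> (real \<Rightarrow> real) \<Rightarrow> (real \<Rightarrow> real) \<Rightarrow> real \<Rightarrow> real \<Rightarrow> real" where
  "track_gauge_dt K \<delta> Y Yd t y =
     (-2*K*exp (-2*K*t) * (y - Y t)\<^sup>2 - 2*exp (-2*K*t) * (y - Y t) * Yd t) / \<delta>\<^sup>2"

definition track_gauge_dy :: "real \<Rightarrow> real \<Rightarrow> (real \<Rightarrow> real) \<Rightarrow> real \<Rightarrow> real \<Rightarrow> real" where
  "track_gauge_dy K \<delta> Y t y = 2*exp (-2*K*t) * (y - Y t) / \<delta>\<^sup>2"

text \<open>A bump around a characteristic \<open>Y\<close> with frequency \<open>w0\<close>, supported in the tube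
  \<open>|y - Y t| < \<delta> e\<^sup>K\<^sup>t\<close>, \<open>|v - w0| < \<delta>\<close> up to time \<open>T + 1\<close>. When the tube widens faster than the
  velocity field can spread it, its mass under a measure-valued solution cannot decrease.\<close>

definition track_bump ::
    "real \<Rightarrow> real \<Rightarrow> real \<Rightarrow> real \<Rightarrow> (real \<Rightarrow> real) \<Rightarrow> real \<Rightarrow> real \<Rightarrow> real \<Rightarrow> real" where
  "track_bump K \<delta> T w0 Y = (\<lambda>t y v. smooth_step (T+1-t) * smooth_step (2 - 2 * track_gauge K \<delta> Y t y)
      * smooth_step (2 - 2*((v-w0)/\<delta>)\<^sup>2))"

definition track_bump_dt :: "real \<Rightarrow> real \<Rightarrow> real \<Rightarrow> real \<Rightarrow> (real \<Rightarrow> real) \<Rightarrow> (real \<Rightarrow> real)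
    \<Rightarrow> real \<Rightarrow> real \<Rightarrow> real \<Rightarrow> real" where
  "track_bump_dt K \<delta> T w0 Y Yd = (\<lambda>t y v.
      - smooth_step' (T+1-t) * smooth_step (2 - 2 * track_gauge K \<delta> Y t y) * smooth_step (2 - 2*((v-w0)/\<delta>)\<^sup>2)
      + smooth_step (T+1-t) * (smooth_step' (2 - 2 * track_gauge K \<delta> Y t y) * (-2 * track_gauge_dt K \<delta> Y Yd t y))
        * smooth_step (2 - 2*((v-w0)/\<delta>)\<^sup>2))"

definition track_bump_dy ::
    "real \<Rightarrow> real \<Rightarrow> real \<Rightarrow> real \<Rightarrow> (real \<Rightarrow> real) \<Rightarrow> real \<Rightarrow> real \<Rightarrow> real \<Rightarrow> real" where
  "track_bump_dy K \<delta> T w0 Y = (\<lambda>t y v.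
      smooth_step (T+1-t) * (smooth_step' (2 - 2 * track_gauge K \<delta> Y t y) * (-2 * track_gauge_dy K \<delta> Y t y))
      * smooth_step (2 - 2*((v-w0)/\<delta>)\<^sup>2))"

lemma has_real_derivative_track_gauge_t:
  assumes "(Y has_real_derivative Yd t) (at t within {0..})"
  shows "((\<lambda>t. track_gauge K \<delta> Y t y) has_real_derivative track_gauge_dt K \<delta> Y Yd t y) (at t within {0..})"
proof -
  have "((\<lambda>t. exp (-2*K*t) * (y - Y t)\<^sup>2) has_real_derivative
      (-2*K*exp (-2*K*t) * (y - Y t)\<^sup>2 - 2*exp (-2*K*t) * (y - Y t) * Yd t)) (at t within {0..})"
    by (rule derivative_eq_intros refl assms | simp)+
  then show ?thesis unfolding track_gauge_def[abs_def] track_gauge_dt_def by (rule DERIV_cdivide)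
qed

lemma has_real_derivative_track_gauge_y:
  "((\<lambda>y. track_gauge K \<delta> Y t y) has_real_derivative track_gauge_dy K \<delta> Y t y) (at y)"
proof -
  have "((\<lambda>y. exp (-2*K*t) * (y - Y t)\<^sup>2) has_real_derivative 2*exp (-2*K*t) * (y - Y t)) (at y)"
    by (rule derivative_eq_intros refl | simp)+
  then show ?thesis unfolding track_gauge_def[abs_def] track_gauge_dy_def by (rule DERIV_cdivide)
qed

lemma track_bump_eq_0:
  assumes bounded_Y: "\<And>t. t \<le> T + 1 \<Longrightarrow> \<bar>Y t\<bar> \<le> BY" and "\<delta> > 0" and "K \<ge> 0"
    and far: "T + 1 \<le> t \<or> BY + \<delta> * exp (K*(T+1)) \<le> \<bar>y\<bar> \<or> \<bar>w0\<bar> + \<delta> \<le> \<bar>v\<bar>"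
  shows "track_bump K \<delta> T w0 Y t y v = 0"
proof -
  consider "T + 1 \<le> t" | "t < T + 1" "BY + \<delta> * exp (K*(T+1)) \<le> \<bar>y\<bar>" | "\<bar>w0\<bar> + \<delta> \<le> \<bar>v\<bar>"
    using far by force
  then show ?thesis
  proof cases
    case 1
    then show ?thesis unfolding track_bump_def by (simp add: smooth_step_nonpos)
  next
    case 2
    have "\<delta> * exp (K*t) \<le> \<delta> * exp (K*(T+1))"
      using 2 \<open>K \<ge> 0\<close> \<open>\<delta> > 0\<close> by (auto intro: mult_left_mono)
    also have "\<dots> \<le> \<bar>y - Y t\<bar>" using 2 bounded_Y[of t] by auto
    finally have "(\<delta> * exp (K*t))\<^sup>2 \<le> (y - Y t)\<^sup>2"
      using \<open>\<delta> > 0\<close> by (metis abs_le_square_iff abs_of_pos exp_gt_zero mult_pos_pos)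
    then have "\<delta>\<^sup>2 \<le> exp (-2*K*t) * (y - Y t)\<^sup>2"
      using mult_left_mono[of "(\<delta> * exp (K*t))\<^sup>2" "(y - Y t)\<^sup>2" "exp (-2*K*t)"]
      by (simp add: power_mult_distrib power2_eq_square exp_add[symmetric] algebra_simps)
    then have "track_gauge K \<delta> Y t y \<ge> 1" unfolding track_gauge_def using \<open>\<delta> > 0\<close> by simp
    then show ?thesis unfolding track_bump_def by (simp add: smooth_step_nonpos)
  next
    case 3
    then have "\<bar>v - w0\<bar> \<ge> \<delta>" by auto
    then have "((v - w0)/\<delta>)\<^sup>2 \<ge> 1" using \<open>\<delta> > 0\<close>
      by (simp add: power_divide abs_le_square_iff[symmetric] le_divide_eq)
    then show ?thesis unfolding track_bump_def by (simp add: smooth_step_nonpos)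
  qed
qed

lemma test_fun_track_bump:
  assumes deriv_Y: "\<And>t. t \<ge> 0 \<Longrightarrow> (Y has_real_derivative Yd t) (at t within {0..})"
    and "continuous_on {0..} Y" "continuous_on {0..} Yd"
    and bounded_Y: "\<And>t. t \<le> T + 1 \<Longrightarrow> \<bar>Y t\<bar> \<le> BY" and "\<delta> > 0" and "K \<ge> 0"
  shows "test_fun (track_bump K \<delta> T w0 Y) (track_bump_dt K \<delta> T w0 Y Yd) (track_bump_dy K \<delta> T w0 Y)"
  unfolding test_fun_def
proof (intro exI[of _ "\<lambda>t y v. smooth_step (T+1-t) * smooth_step (2 - 2 * track_gauge K \<delta> Y t y)
      * (smooth_step' (2 - 2*((v-w0)/\<delta>)\<^sup>2) * (-2 * (2 * ((v-w0)/\<delta>) * (1/\<delta>))))"] conjI allI impI)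
  fix t y v :: real assume "t \<ge> 0"
  have "\<delta> \<noteq> 0" using \<open>\<delta> > 0\<close> by simp
  show "((\<lambda>s. track_bump K \<delta> T w0 Y s y v) has_real_derivative track_bump_dt K \<delta> T w0 Y Yd t y v)
      (at t within {0..})"
    unfolding track_bump_def track_bump_dt_def
    by (rule derivative_eq_intros refl has_real_derivative_track_gauge_t deriv_Y \<open>t \<ge> 0\<close> | simp)+
       (simp add: algebra_simps)
  show "((\<lambda>y. track_bump K \<delta> T w0 Y t y v) has_real_derivative track_bump_dy K \<delta> T w0 Y t y v) (at y)"
    unfolding track_bump_def track_bump_dy_def
    by (rule derivative_eq_intros refl has_real_derivative_track_gauge_y | simp)+
  show "((\<lambda>v. track_bump K \<delta> T w0 Y t y v) has_real_derivative
      smooth_step (T+1-t) * smooth_step (2 - 2 * track_gauge K \<delta> Y t y)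
      * (smooth_step' (2 - 2*((v-w0)/\<delta>)\<^sup>2) * (-2 * (2 * ((v-w0)/\<delta>) * (1/\<delta>))))) (at v)"
    unfolding track_bump_def
    by (rule derivative_eq_intros refl | simp add: \<open>\<delta> \<noteq> 0\<close>)+
       (simp add: power2_eq_square field_simps \<open>\<delta> \<noteq> 0\<close>)
next
  have Y: "continuous_on ({0..} \<times> UNIV) (\<lambda>p::real\<times>real\<times>real. Y (fst p))"
    and Yd: "continuous_on ({0..} \<times> UNIV) (\<lambda>p::real\<times>real\<times>real. Yd (fst p))"
    by (auto intro!: continuous_on_compose2[OF assms(2)] continuous_on_compose2[OF assms(3)]
        continuous_intros)
  note defs = track_bump_def track_bump_dt_def track_bump_dy_def
    track_gauge_def track_gauge_dt_def track_gauge_dy_def case_prod_beta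
  show "continuous_on ({0..} \<times> UNIV) (\<lambda>(t, x, w). track_bump K \<delta> T w0 Y t x w)"
    and "continuous_on ({0..} \<times> UNIV) (\<lambda>(t, x, w). track_bump_dt K \<delta> T w0 Y Yd t x w)"
    and "continuous_on ({0..} \<times> UNIV) (\<lambda>(t, x, w). track_bump_dy K \<delta> T w0 Y t x w)"
    and "continuous_on ({0..} \<times> UNIV) (\<lambda>(t, x, w). smooth_step (T+1-t)
      * smooth_step (2 - 2 * track_gauge K \<delta> Y t x)
      * (smooth_step' (2 - 2*((w-w0)/\<delta>)\<^sup>2) * (-2 * (2 * ((w-w0)/\<delta>) * (1/\<delta>)))))"
    unfolding defs by (intro continuous_intros Y Yd; use \<open>\<delta> > 0\<close> in simp)+
next
  show "\<exists>R. \<forall>t x w. R \<le> t \<or> R \<le> \<bar>x\<bar> \<or> R \<le> \<bar>w\<bar> \<longrightarrow> track_bump K \<delta> T w0 Y t x w = 0"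
    by (rule exI[of _ "max (T + 1) (max (BY + \<delta> * exp (K*(T+1))) (\<bar>w0\<bar> + \<delta>))"])
       (auto intro!: track_bump_eq_0[OF bounded_Y \<open>\<delta> > 0\<close> \<open>K \<ge> 0\<close>])
qed

lemma track_bump_start: "T \<ge> 0 \<Longrightarrow> track_bump K \<delta> T w0 Y 0 (Y 0) w0 = 1"
  unfolding track_bump_def track_gauge_def by (simp add: smooth_step_ge_1)

lemma track_bump_bounds: "0 \<le> track_bump K \<delta> T w0 Y t y v \<and> track_bump K \<delta> T w0 Y t y v \<le> 1"
  unfolding track_bump_def using smooth_step_bounds by (intro conjI mult_nonneg_nonneg mult_le_one) auto

lemma track_bump_nonzero_imp_close:
  assumes "track_bump K \<delta> T w0 Y T y v \<noteq> 0" and "\<delta> > 0"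
  shows "\<bar>y - Y T\<bar> < \<delta> * exp (K * T)"
proof -
  have "smooth_step (2 - 2 * track_gauge K \<delta> Y T y) \<noteq> 0"
    using assms(1) unfolding track_bump_def by (metis mult_zero_left mult_zero_right)
  then have "track_gauge K \<delta> Y T y < 1"
    using smooth_step_nonpos[of "2 - 2 * track_gauge K \<delta> Y T y"] by linarith
  then have "exp (-2*K * T) * (y - Y T)\<^sup>2 < \<delta>\<^sup>2"
    using \<open>\<delta> > 0\<close> unfolding track_gauge_def by (simp add: divide_less_eq)
  moreover have "\<delta>\<^sup>2 = exp (-2*K * T) * (\<delta> * exp (K * T))\<^sup>2"
    by (simp add: power_mult_distrib power2_eq_square exp_add[symmetric])
  ultimately have "exp (-2*K * T) * \<bar>y - Y T\<bar>\<^sup>2 < exp (-2*K * T) * (\<delta> * exp (K * T))\<^sup>2"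
    by (simp only: power2_abs)
  then have "\<bar>y - Y T\<bar>\<^sup>2 < (\<delta> * exp (K * T))\<^sup>2"
    by (metis exp_gt_zero mult_less_cancel_left_pos)
  then show ?thesis by (rule power2_less_imp_less) (use \<open>\<delta> > 0\<close> in simp)
qed

lemma track_gauge_gt_half_imp_close:
  assumes "1/2 < track_gauge K \<delta> Y s y" and "((v - w0)/\<delta>)\<^sup>2 < 1" and "\<delta> > 0" and "0 \<le> K" and "0 \<le> s"
  shows "\<bar>v - w0\<bar> \<le> 2 * \<bar>y - Y s\<bar>"
proof -
  have "exp (-2*K * s) \<le> 1" using assms(4,5) by simp
  have "\<delta>\<^sup>2 < 2 * (exp (-2*K * s) * (y - Y s)\<^sup>2)"
    using assms(1,3) unfolding track_gauge_def by (simp add: field_simps)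
  also have "\<dots> \<le> 2 * (y - Y s)\<^sup>2"
    using \<open>exp (-2*K * s) \<le> 1\<close> mult_right_mono[of "exp (-2*K * s)" 1 "(y - Y s)\<^sup>2"] by simp
  finally have "\<delta>\<^sup>2 < 2 * (y - Y s)\<^sup>2" .
  moreover have "(v - w0)\<^sup>2 < \<delta>\<^sup>2" using assms(2,3) by (simp add: power_divide divide_less_eq)
  ultimately have "(v - w0)\<^sup>2 < 4 * (y - Y s)\<^sup>2" using zero_le_power2[of "y - Y s"] by linarith
  then have "\<bar>v - w0\<bar>\<^sup>2 < (2 * \<bar>y - Y s\<bar>)\<^sup>2" by (simp add: power_mult_distrib)
  then show ?thesis using power2_less_imp_less[of "\<bar>v - w0\<bar>" "2 * \<bar>y - Y s\<bar>"] by simp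
qed

lemma track_bump_generator_nonneg:
  fixes f :: "real \<Rightarrow> real \<Rightarrow> real"
  assumes lip: "\<And>y v. \<bar>f y v - f (Y s) w0\<bar> \<le> L * \<bar>y - Y s\<bar> + J * \<bar>v - w0\<bar>"
    and Yd: "Yd s = f (Y s) w0" and K: "L + 2 * J \<le> K" and "0 \<le> L" "0 \<le> J" and "\<delta> > 0"
    and "0 \<le> s" "s \<le> T"
  shows "0 \<le> track_bump_dt K \<delta> T w0 Y Yd s y v + f y v * track_bump_dy K \<delta> T w0 Y s y v"
proof -
  define u where "u = track_gauge K \<delta> Y s y"
  define H where "H = smooth_step (2 - 2*((v-w0)/\<delta>)\<^sup>2)"
  define a where "a = y - Y s"
  have "smooth_step (T+1-s) = 1" "smooth_step' (T+1-s) = 0"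
    using \<open>s \<le> T\<close> by (auto intro: smooth_step_ge_1 smooth_step'_ge_1)
  note switched_on = this
  have generator: "track_bump_dt K \<delta> T w0 Y Yd s y v + f y v * track_bump_dy K \<delta> T w0 Y s y v
      = (-4 * exp (-2*K * s) / \<delta>\<^sup>2) * (smooth_step' (2 - 2*u) * H * (a * (f y v - Yd s) - K * a\<^sup>2))"
    unfolding track_bump_dt_def track_bump_dy_def switched_on u_def[symmetric] H_def[symmetric]
      track_gauge_dt_def track_gauge_dy_def a_def
    using \<open>\<delta> > 0\<close> by (simp add: field_simps power2_eq_square)
  have "smooth_step' (2 - 2*u) * H * (a * (f y v - Yd s) - K * a\<^sup>2) \<le> 0"
  proof (cases "smooth_step' (2 - 2*u) = 0 \<or> H = 0")
    case False
    then have "1/2 < u" and "((v-w0)/\<delta>)\<^sup>2 < 1"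
      using smooth_step'_nonpos[of "2 - 2*u"] smooth_step'_ge_1[of "2 - 2*u"]
        smooth_step_nonpos[of "2 - 2*((v-w0)/\<delta>)\<^sup>2"] unfolding H_def by force+
    then have close: "\<bar>v - w0\<bar> \<le> 2 * \<bar>a\<bar>"
      using track_gauge_gt_half_imp_close[of K \<delta> Y s y v w0] \<open>\<delta> > 0\<close> \<open>0 \<le> s\<close> \<open>0 \<le> L\<close> \<open>0 \<le> J\<close> K
      unfolding u_def a_def by linarith
    have "a * (f y v - Yd s) \<le> \<bar>a\<bar> * \<bar>f y v - Yd s\<bar>" by (simp add: abs_mult[symmetric])
    also have "\<dots> \<le> \<bar>a\<bar> * (L * \<bar>a\<bar> + J * \<bar>v - w0\<bar>)"
      using lip[of y v] unfolding Yd a_def by (rule mult_left_mono) simp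
    also have "\<dots> \<le> \<bar>a\<bar> * (L * \<bar>a\<bar> + J * (2 * \<bar>a\<bar>))"
      using close \<open>0 \<le> J\<close> by (intro mult_left_mono add_left_mono) auto
    also have "\<dots> = (L + 2 * J) * a\<^sup>2" by (simp add: algebra_simps power2_eq_square abs_mult_self_eq)
    also have "\<dots> \<le> K * a\<^sup>2" using K by (intro mult_right_mono) auto
    finally have "a * (f y v - Yd s) - K * a\<^sup>2 \<le> 0" by simp
    moreover have "0 \<le> smooth_step' (2 - 2*u) * H"
      unfolding H_def using smooth_step'_nonneg smooth_step_bounds by simp
    ultimately show ?thesis by (simp add: mult_nonneg_nonpos)
  qed auto
  then show ?thesis unfolding generator by (intro mult_nonpos_nonpos) auto
qed

definition moment_test :: "real \<Rightarrow> real \<Rightarrow> real \<Rightarrow> real \<Rightarrow> real \<Rightarrow> real" where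
  "moment_test c T = (\<lambda>t y v. smooth_step (T+1-t) * (y * smooth_step (c - y\<^sup>2)) * smooth_step (c - v\<^sup>2))"

definition moment_test_dt :: "real \<Rightarrow> real \<Rightarrow> real \<Rightarrow> real \<Rightarrow> real \<Rightarrow> real" where
  "moment_test_dt c T = (\<lambda>t y v. - smooth_step' (T+1-t) * (y * smooth_step (c - y\<^sup>2)) * smooth_step (c - v\<^sup>2))"

definition moment_test_dy :: "real \<Rightarrow> real \<Rightarrow> real \<Rightarrow> real \<Rightarrow> real \<Rightarrow> real" where
  "moment_test_dy c T = (\<lambda>t y v. smooth_step (T+1-t)
      * (smooth_step (c - y\<^sup>2) + y * (smooth_step' (c - y\<^sup>2) * (- (2 * y)))) * smooth_step (c - v\<^sup>2))"

lemma test_fun_moment_test: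
  assumes "c \<ge> 1"
  shows "test_fun (moment_test c T) (moment_test_dt c T) (moment_test_dy c T)"
  unfolding test_fun_def
proof (intro exI[of _ "\<lambda>t y v. smooth_step (T+1-t) * (y * smooth_step (c - y\<^sup>2))
      * (smooth_step' (c - v\<^sup>2) * (- (2 * v)))"] conjI allI impI)
  fix t y v :: real
  show "((\<lambda>s. moment_test c T s y v) has_real_derivative moment_test_dt c T t y v) (at t within {0..})"
    unfolding moment_test_def moment_test_dt_def by (rule derivative_eq_intros refl | simp)+
  show "((\<lambda>y. moment_test c T t y v) has_real_derivative moment_test_dy c T t y v) (at y)"
    unfolding moment_test_def moment_test_dy_def by (rule derivative_eq_intros refl | simp)+
  show "((\<lambda>v. moment_test c T t y v) has_real_derivative smooth_step (T+1-t) * (y * smooth_step (c - y\<^sup>2))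
      * (smooth_step' (c - v\<^sup>2) * (- (2 * v)))) (at v)"
    unfolding moment_test_def by (rule derivative_eq_intros refl | simp)+
next
  note defs = moment_test_def moment_test_dt_def moment_test_dy_def case_prod_beta
  show "continuous_on ({0..} \<times> UNIV) (\<lambda>(t, x, w). moment_test c T t x w)"
    and "continuous_on ({0..} \<times> UNIV) (\<lambda>(t, x, w). moment_test_dt c T t x w)"
    and "continuous_on ({0..} \<times> UNIV) (\<lambda>(t, x, w). moment_test_dy c T t x w)"
    and "continuous_on ({0..} \<times> UNIV) (\<lambda>(t, x, w). smooth_step (T+1-t) * (x * smooth_step (c - x\<^sup>2))
      * (smooth_step' (c - w\<^sup>2) * (- (2 * w))))"
    unfolding defs by (intro continuous_intros)+
next
  have square_ge: "c \<le> z\<^sup>2" if "c \<le> \<bar>z\<bar>" for z :: real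
    using mult_mono[of c "\<bar>z\<bar>" 1 "\<bar>z\<bar>"] that \<open>c \<ge> 1\<close> by (simp add: power2_eq_square)
  show "\<exists>R. \<forall>t x w. R \<le> t \<or> R \<le> \<bar>x\<bar> \<or> R \<le> \<bar>w\<bar> \<longrightarrow> moment_test c T t x w = 0"
    by (rule exI[of _ "max (T+1) c"]) (auto simp: moment_test_def smooth_step_nonpos dest!: square_ge)
qed

lemma moment_test_inside:
  assumes "t \<le> T" and "y\<^sup>2 \<le> c - 1" and "v\<^sup>2 \<le> c - 1"
  shows "moment_test c T t y v = y" and "moment_test_dt c T t y v = 0" and "moment_test_dy c T t y v = 1"
  using assms
  by (simp_all add: moment_test_def moment_test_dt_def moment_test_dy_def smooth_step_ge_1 smooth_step'_ge_1)

section \<open>Characteristics of a measure-valued solution\<close>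

text \<open>The hypotheses of the theorem that the estimate uses.\<close>

locale mv_flow =
  fixes \<nu> :: "real measure"
    and F :: "(real \<times> real) measure \<Rightarrow> real \<Rightarrow> real \<Rightarrow> real"
    and \<mu> :: "real \<Rightarrow> (real \<times> real) measure"
    and X :: "real \<Rightarrow> real \<Rightarrow> real \<Rightarrow> real"
    and A I M \<kappa> D ts :: real
    and \<Omega> :: "real set" and \<gamma> \<omega>c :: real and xc :: "real \<Rightarrow> real"
  assumes \<Omega>_def: "\<Omega> = msupp \<nu>"
    and \<gamma>_def: "\<gamma> = diameter (msupp \<nu>)"
    and \<omega>c_def: "\<omega>c = integral\<^sup>L \<nu> (\<lambda>w. w)"
    and xc_def: "xc = (\<lambda>t. integral\<^sup>L (\<mu> t) fst)"
  assumes nu: "prob_space \<nu>" "sets \<nu> = sets borel" "integrable \<nu> (\<lambda>w. w\<^sup>2)" "bounded \<Omega>"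
    and pos: "A > 0" "I > 0" "M > 0" "\<kappa> > 0"
    and A1_0: "\<And>\<mu>1 \<mu>2 x w. P2nu \<nu> \<mu>1 \<Longrightarrow> P2nu \<nu> \<mu>2 \<Longrightarrow> w \<in> \<Omega> \<Longrightarrow>
                 ennreal \<bar>F \<mu>1 x w - F \<mu>2 x w\<bar> \<le> ennreal (\<kappa> * M) * W1 \<mu>1 \<mu>2"
    and A1_1: "\<And>\<mu>1 \<mu>2 x w. P2nu \<nu> \<mu>1 \<Longrightarrow> P2nu \<nu> \<mu>2 \<Longrightarrow> w \<in> \<Omega> \<Longrightarrow>
                 ennreal \<bar>Fx F \<mu>1 x w - Fx F \<mu>2 x w\<bar> \<le> ennreal (\<kappa> * M) * W1 \<mu>1 \<mu>2"
    and A2_C2: "\<And>\<mu>1. P2nu \<nu> \<mu>1 \<Longrightarrow> C2_R2 (F \<mu>1)"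
    and A2_x: "\<And>\<mu>1 x w. P2nu \<nu> \<mu>1 \<Longrightarrow> \<bar>Fx F \<mu>1 x w\<bar> \<le> \<kappa> * I"
    and A2_xx: "\<And>\<mu>1 x w. P2nu \<nu> \<mu>1 \<Longrightarrow> \<bar>Fxx F \<mu>1 x w\<bar> \<le> \<kappa> * I"
    and A2_w: "\<And>\<mu>1 x w. P2nu \<nu> \<mu>1 \<Longrightarrow> \<bar>Fw F \<mu>1 x w\<bar> \<le> I"
    and A4: "\<And>x. F (return borel x \<Otimes>\<^sub>M \<nu>) x \<omega>c \<ge> A"
    and D: "D > 0" "A - ((\<kappa> + 1) * I + \<kappa> * M) * D - I * \<gamma> > 0"
    and sol: "mv_solution \<nu> F \<mu>"
    and ts: "ts > 0"
    and diam: "\<And>t p q. t \<in> {0..ts} \<Longrightarrow> p \<in> msupp (\<mu> t) \<Longrightarrow> q \<in> msupp (\<mu> t) \<Longrightarrow>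
                 \<bar>fst p - fst q\<bar> \<le> D"
    and flow: "\<And>t x w. t \<ge> 0 \<Longrightarrow>
                 ((\<lambda>t. X t x w) has_real_derivative F (\<mu> t) (X t x w) w) (at t within {0..})"
    and flow0: "\<And>x w. X 0 x w = x"
begin

lemma F_derivatives:
  assumes "P2nu \<nu> m"
  shows "((\<lambda>y. F m y w) has_real_derivative Fx F m x w) (at x)"
    and "((\<lambda>v. F m x v) has_real_derivative Fw F m x w) (at w)"
    and "((\<lambda>y. Fx F m y w) has_real_derivative Fxx F m x w) (at x)"
    and "continuous_on UNIV (\<lambda>(x,w). F m x w)"
proof -
  obtain f1 f2 f11 where
    d: "\<And>x w. ((\<lambda>y. F m y w) has_real_derivative f1 x w) (at x)
          \<and> ((\<lambda>v. F m x v) has_real_derivative f2 x w) (at w)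
          \<and> ((\<lambda>y. f1 y w) has_real_derivative f11 x w) (at x)"
    and "continuous_on UNIV (\<lambda>(x,w). F m x w)"
    using A2_C2[OF assms] unfolding C2_R2_def by metis
  have Fx: "Fx F m = f1" and "Fw F m = f2"
    unfolding Fx_def Fw_def using d by (auto intro!: ext DERIV_imp_deriv)
  moreover have "Fxx F m = f11" unfolding Fxx_def Fx using d by (auto intro!: ext DERIV_imp_deriv)
  ultimately show "((\<lambda>y. F m y w) has_real_derivative Fx F m x w) (at x)"
    and "((\<lambda>v. F m x v) has_real_derivative Fw F m x w) (at w)"
    and "((\<lambda>y. Fx F m y w) has_real_derivative Fxx F m x w) (at x)"
    using d by auto
  show "continuous_on UNIV (\<lambda>(x,w). F m x w)" by fact
qed

lemma F_lipschitz_x: "P2nu \<nu> m \<Longrightarrow> \<bar>F m b w - F m a w\<bar> \<le> \<kappa> * I * \<bar>b - a\<bar>"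
  using field_differentiable_bound[of UNIV "\<lambda>y. F m y w" "\<lambda>y. Fx F m y w" "\<kappa> * I" b a]
    F_derivatives(1) A2_x by auto

lemma F_lipschitz_w: "P2nu \<nu> m \<Longrightarrow> \<bar>F m x b - F m x a\<bar> \<le> I * \<bar>b - a\<bar>"
  using field_differentiable_bound[of UNIV "\<lambda>v. F m x v" "\<lambda>v. Fw F m x v" I b a]
    F_derivatives(2) A2_w by auto

lemma Fx_lipschitz_x: "P2nu \<nu> m \<Longrightarrow> \<bar>Fx F m b w - Fx F m a w\<bar> \<le> \<kappa> * I * \<bar>b - a\<bar>"
  using field_differentiable_bound[of UNIV "\<lambda>y. Fx F m y w" "\<lambda>y. Fxx F m y w" "\<kappa> * I" b a]
    F_derivatives(3) A2_xx by auto

lemma F_lipschitz: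
  "P2nu \<nu> m \<Longrightarrow> \<bar>F m y v - F m y' v'\<bar> \<le> \<kappa> * I * \<bar>y - y'\<bar> + I * \<bar>v - v'\<bar>"
  using F_lipschitz_x[of m y v y'] F_lipschitz_w[of m y' v v'] by linarith

lemma continuous_on_F_compose [continuous_intros]:
  assumes "P2nu \<nu> m" "continuous_on U f" "continuous_on U g"
  shows "continuous_on U (\<lambda>x. F m (f x) (g x))"
  using continuous_on_compose[OF continuous_on_Pair[OF assms(2,3)]
      continuous_on_subset[OF F_derivatives(4)[OF assms(1)]]]
  by (simp add: comp_def)

lemma P2nu_mu: "t \<ge> 0 \<Longrightarrow> P2nu \<nu> (\<mu> t)"
  using sol unfolding mv_solution_def by auto

lemma prob_space_mu: "t \<ge> 0 \<Longrightarrow> prob_space (\<mu> t)"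
  and sets_mu: "t \<ge> 0 \<Longrightarrow> sets (\<mu> t) = sets borel"
  using P2nu_mu unfolding P2nu_def by auto

lemma msupp_mu_snd: "t \<ge> 0 \<Longrightarrow> p \<in> msupp (\<mu> t) \<Longrightarrow> snd p \<in> \<Omega>"
  using P2nu_msupp_snd[OF P2nu_mu] unfolding \<Omega>_def by auto

lemma AE_mu_msupp:
  assumes "t \<ge> 0" shows "AE p in \<mu> t. p \<in> msupp (\<mu> t) \<and> snd p \<in> \<Omega>"
  using AE_in_msupp[OF sets_mu[OF assms]] by eventually_elim (use msupp_mu_snd[OF assms] in auto)

lemma weak_formulation:
  assumes "test_fun \<phi> \<phi>t \<phi>x" and "t \<ge> 0"
  shows "integral\<^sup>L (\<mu> t) (\<lambda>(x,w). \<phi> t x w) = integral\<^sup>L (\<mu> 0) (\<lambda>(x,w). \<phi> 0 x w)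
    + integral {0..t} (\<lambda>s. integral\<^sup>L (\<mu> s) (\<lambda>(x,w). \<phi>t s x w + F (\<mu> s) x w * \<phi>x s x w))"
  using sol assms unfolding mv_solution_def by blast

lemma Omega_diam: "w \<in> \<Omega> \<Longrightarrow> w' \<in> \<Omega> \<Longrightarrow> \<bar>w - w'\<bar> \<le> \<gamma>"
  using diameter_bounded_bound[OF nu(4)] unfolding \<gamma>_def \<Omega>_def[symmetric] by (simp add: dist_real_def)

lemma Omega_nonempty: "\<Omega> \<noteq> {}"
  using msupp_nonempty[OF nu(2,1)] unfolding \<Omega>_def .

lemma gamma_nonneg: "\<gamma> \<ge> 0"
  using Omega_diam Omega_nonempty by fastforce

lemma omega_c_close: assumes "w \<in> \<Omega>" shows "\<bar>w - \<omega>c\<bar> \<le> \<gamma>"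
proof -
  interpret prob_space \<nu> by (rule nu(1))
  have AE_\<Omega>: "AE v in \<nu>. v \<in> \<Omega>" using AE_in_msupp[OF nu(2)] unfolding \<Omega>_def .
  have "AE v in \<nu>. \<bar>v\<bar> \<le> \<bar>w\<bar> + \<gamma>"
    using AE_\<Omega> by eventually_elim (use Omega_diam[OF _ assms] in force)
  then have "integrable \<nu> (\<lambda>v. v)"
    by (intro integrable_bounded_continuous[OF nu(1,2)] continuous_intros)
  then have "w - \<omega>c = integral\<^sup>L \<nu> (\<lambda>v. w - v)" unfolding \<omega>c_def by (simp add: prob_space)
  also have "\<bar>\<dots>\<bar> \<le> \<gamma>"
    by (rule abs_integral_le_AE[OF nu(1)]) (use AE_\<Omega> Omega_diam[OF assms] in \<open>auto elim: AE_mp\<close>)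
  finally show ?thesis .
qed

lemma F_diff_le_W1:
  assumes "P2nu \<nu> m1" "P2nu \<nu> m2" "W1 m1 m2 \<le> ennreal e" "e \<ge> 0" "w \<in> \<Omega>"
  shows "\<bar>F m1 x w - F m2 x w\<bar> \<le> \<kappa> * M * e"
  using real_le_if_ennreal_le_mult[OF A1_0[OF assms(1,2,5)] assms(3)] pos assms(4) by simp

lemma Fx_diff_le_W1:
  assumes "P2nu \<nu> m1" "P2nu \<nu> m2" "W1 m1 m2 \<le> ennreal e" "e \<ge> 0" "w \<in> \<Omega>"
  shows "\<bar>Fx F m1 x w - Fx F m2 x w\<bar> \<le> \<kappa> * M * e"
  using real_le_if_ennreal_le_mult[OF A1_1[OF assms(1,2,5)] assms(3)] pos assms(4) by simp

lemma eventually_W1_mu_le: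
  assumes "t \<ge> 0" and "e > 0"
  shows "eventually (\<lambda>s. s \<ge> 0 \<and> W1 (\<mu> s) (\<mu> t) \<le> ennreal e) (at t within {0..})"
proof -
  have "((\<lambda>s. W2sq (\<mu> s) (\<mu> t)) \<longlongrightarrow> 0) (at t within {0..})"
    using sol assms(1) unfolding mv_solution_def by auto
  then have "eventually (\<lambda>s. W2sq (\<mu> s) (\<mu> t) < ennreal (e\<^sup>2)) (at t within {0..})"
    by (rule order_tendstoD) (use assms(2) in simp)
  moreover have "eventually (\<lambda>s. s \<in> {0..}) (at t within {0..})"
    by (simp add: eventually_at_filter)
  ultimately show ?thesis
    by eventually_elim (use W1_le_of_W2sq_less assms(2) prob_space_mu in auto)
qed

lemma msupp_mu_close_xc:
  assumes t: "t \<in> {0..ts}" and p: "p \<in> msupp (\<mu> t)"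
  shows "\<bar>fst p - xc t\<bar> \<le> D"
proof -
  have "t \<ge> 0" using t by auto
  interpret prob_space "\<mu> t" by (rule prob_space_mu[OF \<open>t \<ge> 0\<close>])
  have close: "AE q in \<mu> t. \<bar>fst q - fst p\<bar> \<le> D"
    using AE_mu_msupp[OF \<open>t \<ge> 0\<close>] by eventually_elim (use diam[OF t _ p] in auto)
  have "integrable (\<mu> t) fst"
    by (rule integrable_bounded_continuous[OF prob_space_mu sets_mu, where B="\<bar>fst p\<bar> + D"])
       (use close \<open>t \<ge> 0\<close> in \<open>auto intro!: continuous_intros elim!: AE_mp\<close>)
  then have "xc t - fst p = integral\<^sup>L (\<mu> t) (\<lambda>q. fst q - fst p)"
    unfolding xc_def by (simp add: prob_space)
  also have "\<bar>\<dots>\<bar> \<le> D" by (rule abs_integral_le_AE[OF prob_space_mu[OF \<open>t \<ge> 0\<close>] close])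
  finally show ?thesis by (simp add: abs_minus_commute)
qed

definition mu_tilde :: "real \<Rightarrow> (real \<times> real) measure" where
  "mu_tilde t = return borel (xc t) \<Otimes>\<^sub>M \<nu>"

lemma P2nu_mu_tilde: "P2nu \<nu> (mu_tilde t)"
  unfolding mu_tilde_def by (rule P2nu_return_pair[OF nu(2,1,3)])

lemma W1_mu_mu_tilde:
  assumes t: "t \<in> {0..ts}"
  shows "W1 (\<mu> t) (mu_tilde t) \<le> ennreal D"
proof -
  have "t \<ge> 0" using t by auto
  define \<pi> where "\<pi> = distr (\<mu> t) borel (\<lambda>p. (p, (xc t, snd p)))"
  have meas: "(\<lambda>p. (p, (xc t, snd p))) \<in> \<mu> t \<rightarrow>\<^sub>M borel"
    by (rule measurable_continuous_sets_borel[OF sets_mu[OF \<open>t \<ge> 0\<close>]]) (intro continuous_intros)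
  have "W1 (\<mu> t) (mu_tilde t) \<le> (\<integral>\<^sup>+ p. ennreal (dist (fst p) (snd p)) \<partial>\<pi>)"
    unfolding W1_def mu_tilde_def \<pi>_def
    by (rule INF_lower[OF collapse_in_couplings[OF P2nu_mu[OF \<open>t \<ge> 0\<close>] nu(2,1)]])
  also have "\<dots> = (\<integral>\<^sup>+ p. ennreal (dist p (xc t, snd p)) \<partial>\<mu> t)"
    unfolding \<pi>_def
    by (subst nn_integral_distr[OF meas]) (auto intro!: measurable_compose[OF _ measurable_ennreal]
        borel_measurable_continuous_onI continuous_intros)
  also have "\<dots> = (\<integral>\<^sup>+ p. ennreal \<bar>fst p - xc t\<bar> \<partial>\<mu> t)"
    by (intro nn_integral_cong) (auto simp: dist_Pair_Pair dist_real_def split: prod.split)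
  also have "\<dots> \<le> (\<integral>\<^sup>+ p. ennreal D \<partial>\<mu> t)"
    using AE_mu_msupp[OF \<open>t \<ge> 0\<close>]
    by (intro nn_integral_mono_AE) (auto elim!: AE_mp intro: ennreal_leI msupp_mu_close_xc[OF t])
  also have "\<dots> = ennreal D" using prob_space_mu[OF \<open>t \<ge> 0\<close>] by (simp add: prob_space.emeasure_space_1)
  finally show ?thesis .
qed

lemma continuous_on_X: "continuous_on {0..} (\<lambda>t. X t x w)"
  unfolding continuous_on_eq_continuous_within using flow DERIV_continuous by blast

lemma continuous_on_F_along_X:
  assumes "w \<in> \<Omega>"
  shows "continuous_on {0..} (\<lambda>t. F (\<mu> t) (X t x w) w)"
  unfolding continuous_on_def
proof (intro ballI tendstoI)
  fix t e :: real assume "t \<in> {0..}" and "e > 0"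
  then have "t \<ge> 0" by simp
  have "\<kappa> * I > 0" "\<kappa> * M > 0" using pos by auto
  have "((\<lambda>s. X s x w) \<longlongrightarrow> X t x w) (at t within {0..})"
    using continuous_on_X \<open>t \<in> {0..}\<close> unfolding continuous_on_def by auto
  then have "eventually (\<lambda>s. dist (X s x w) (X t x w) < e / (2 * (\<kappa> * I))) (at t within {0..})"
    by (rule tendstoD) (use \<open>e > 0\<close> \<open>\<kappa> * I > 0\<close> in simp)
  moreover have "eventually (\<lambda>s. s \<ge> 0 \<and> W1 (\<mu> s) (\<mu> t) \<le> ennreal (e / (4 * (\<kappa> * M))))
      (at t within {0..})"
    by (rule eventually_W1_mu_le[OF \<open>t \<ge> 0\<close>]) (use \<open>e > 0\<close> \<open>\<kappa> * M > 0\<close> in simp)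
  ultimately show "eventually (\<lambda>s. dist (F (\<mu> s) (X s x w) w) (F (\<mu> t) (X t x w) w) < e)
      (at t within {0..})"
  proof eventually_elim
    case (elim s)
    have "\<bar>F (\<mu> s) (X s x w) w - F (\<mu> t) (X s x w) w\<bar> \<le> \<kappa> * M * (e / (4 * (\<kappa> * M)))"
      by (rule F_diff_le_W1[OF P2nu_mu P2nu_mu[OF \<open>t \<ge> 0\<close>]])
         (use elim \<open>e > 0\<close> \<open>\<kappa> * M > 0\<close> assms in auto)
    also have "\<dots> = e / 4" using pos by (simp add: field_simps)
    finally have "\<bar>F (\<mu> s) (X s x w) w - F (\<mu> t) (X s x w) w\<bar> \<le> e / 4" .
    moreover have "\<bar>F (\<mu> t) (X s x w) w - F (\<mu> t) (X t x w) w\<bar> \<le> \<kappa> * I * \<bar>X s x w - X t x w\<bar>"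
      by (rule F_lipschitz_x[OF P2nu_mu[OF \<open>t \<ge> 0\<close>]])
    moreover have "\<kappa> * I * \<bar>X s x w - X t x w\<bar> \<le> \<kappa> * I * (e / (2 * (\<kappa> * I)))"
      using elim \<open>\<kappa> * I > 0\<close> by (intro mult_left_mono) (auto simp: dist_real_def)
    moreover have "\<kappa> * I * (e / (2 * (\<kappa> * I))) = e / 2" using pos by (simp add: field_simps)
    ultimately show ?case using \<open>e > 0\<close> unfolding dist_real_def by linarith
  qed
qed

lemma integral_track_bump_mono:
  fixes x :: real
  assumes "w \<in> \<Omega>" and "T \<ge> 0" and "\<delta> > 0"
  defines "K \<equiv> \<kappa> * I + 2 * I" and "Y \<equiv> \<lambda>t. X (max 0 t) x w"
  shows "integral\<^sup>L (\<mu> 0) (\<lambda>(y,v). track_bump K \<delta> T w Y 0 y v)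
      \<le> integral\<^sup>L (\<mu> T) (\<lambda>(y,v). track_bump K \<delta> T w Y T y v)"
proof -
  define Yd where "Yd = (\<lambda>t. F (\<mu> (max 0 t)) (Y t) w)"
  have Y_eq: "Y t = X t x w" and Yd_eq: "Yd t = F (\<mu> t) (X t x w) w" if "t \<ge> 0" for t
    using that unfolding Y_def Yd_def by simp_all
  have "(Y has_real_derivative Yd t) (at t within {0..})" if "t \<ge> 0" for t
    unfolding Yd_eq[OF that]
    by (rule has_field_derivative_transform_within[OF flow[OF that], where d=1]) (use that Y_eq in auto)
  moreover have "continuous_on {0..} Y"
    using continuous_on_X by (rule continuous_on_cong[THEN iffD1, OF refl, rotated]) (simp add: Y_eq)
  moreover have "continuous_on {0..} Yd"
    using continuous_on_F_along_X[OF \<open>w \<in> \<Omega>\<close>]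
    by (rule continuous_on_cong[THEN iffD1, OF refl, rotated]) (simp add: Yd_eq)
  moreover obtain BY where "\<And>t. t \<le> T + 1 \<Longrightarrow> \<bar>Y t\<bar> \<le> BY"
  proof -
    have "compact (Y ` {0..T+1})"
      by (rule compact_continuous_image) (auto intro: continuous_on_subset[OF \<open>continuous_on {0..} Y\<close>])
    then obtain BY where "\<forall>t\<in>{0..T+1}. norm (Y t) \<le> BY"
      by (meson bounded_iff compact_imp_bounded imageI)
    then show thesis using \<open>T \<ge> 0\<close> by (intro that[of BY]) (auto simp: Y_def max_def)
  qed
  ultimately have test: "test_fun (track_bump K \<delta> T w Y) (track_bump_dt K \<delta> T w Y Yd) (track_bump_dy K \<delta> T w Y)"
    using \<open>\<delta> > 0\<close> pos unfolding K_def by (intro test_fun_track_bump) auto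
  have generator: "0 \<le> track_bump_dt K \<delta> T w Y Yd s y v + F (\<mu> s) y v * track_bump_dy K \<delta> T w Y s y v"
    if "s \<in> {0..T}" for s y v
    using that F_lipschitz[OF P2nu_mu, of s _ _ "Y s" w] pos \<open>\<delta> > 0\<close> Yd_eq[of s] Y_eq[of s]
    unfolding K_def by (intro track_bump_generator_nonneg[where L="\<kappa> * I" and J=I]) auto
  have "0 \<le> integral {0..T} (\<lambda>s. integral\<^sup>L (\<mu> s)
      (\<lambda>(y,v). track_bump_dt K \<delta> T w Y Yd s y v + F (\<mu> s) y v * track_bump_dy K \<delta> T w Y s y v))"
    by (cases "(\<lambda>s. integral\<^sup>L (\<mu> s) (\<lambda>(y,v). track_bump_dt K \<delta> T w Y Yd s y v
        + F (\<mu> s) y v * track_bump_dy K \<delta> T w Y s y v)) integrable_on {0..T}")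
       (auto intro!: integral_nonneg integral_nonneg_AE AE_I2 generator simp: not_integrable_integral)
  then show ?thesis using weak_formulation[OF test \<open>T \<ge> 0\<close>] by linarith
qed

lemma X_tracked_by_msupp:
  assumes "(x, w) \<in> msupp (\<mu> 0)" and "T \<ge> 0" and "e > 0"
  shows "\<exists>q \<in> msupp (\<mu> T). \<bar>fst q - X T x w\<bar> < e"
proof -
  define K where "K = \<kappa> * I + 2 * I"
  define \<delta> where "\<delta> = e * exp (- K * T)"
  define Y where "Y = (\<lambda>t. X (max 0 t) x w)"
  let ?\<phi> = "track_bump K \<delta> T w Y"
  have "w \<in> \<Omega>" using msupp_mu_snd[of 0 "(x, w)"] assms(1) by simp
  have "\<delta> > 0" unfolding \<delta>_def using \<open>e > 0\<close> by simp
  have "0 < integral\<^sup>L (\<mu> 0) (\<lambda>(y,v). ?\<phi> 0 y v)"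
  proof (rule integral_pos_if_pos_on_msupp[OF prob_space_mu sets_mu _ _ _ assms(1), where B=1])
    show "continuous_on UNIV (\<lambda>(y,v). ?\<phi> 0 y v)"
      unfolding track_bump_def track_gauge_def case_prod_beta by (intro continuous_intros) (use \<open>\<delta> > 0\<close> in auto)
    show "0 < (case (x, w) of (y, v) \<Rightarrow> ?\<phi> 0 y v)"
      using track_bump_start[OF \<open>T \<ge> 0\<close>, of K \<delta> w Y] flow0 by (simp add: Y_def)
  qed (use track_bump_bounds in \<open>auto split: prod.split\<close>)
  also have "\<dots> \<le> integral\<^sup>L (\<mu> T) (\<lambda>(y,v). ?\<phi> T y v)"
    unfolding K_def Y_def by (rule integral_track_bump_mono[OF \<open>w \<in> \<Omega>\<close> \<open>T \<ge> 0\<close> \<open>\<delta> > 0\<close>])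
  finally obtain q where "q \<in> msupp (\<mu> T)" and "?\<phi> T (fst q) (snd q) \<noteq> 0"
    using msupp_nonzero_if_integral_nonzero[OF prob_space_mu sets_mu, of T] \<open>T \<ge> 0\<close>
    by (metis (mono_tags, lifting) less_irrefl case_prod_beta)
  then have "\<bar>fst q - Y T\<bar> < \<delta> * exp (K * T)" using track_bump_nonzero_imp_close \<open>\<delta> > 0\<close> by blast
  also have "\<delta> * exp (K * T) = e" unfolding \<delta>_def by (simp add: exp_minus field_simps)
  finally show ?thesis using \<open>q \<in> msupp (\<mu> T)\<close> \<open>T \<ge> 0\<close> unfolding Y_def by auto
qed

lemma X_close_xc:
  assumes "(x, w) \<in> msupp (\<mu> 0)" and t: "t \<in> {0..ts}"
  shows "\<bar>X t x w - xc t\<bar> \<le> D"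
proof (rule field_le_epsilon)
  fix e :: real assume "e > 0"
  have "t \<ge> 0" using t by simp
  obtain q where "q \<in> msupp (\<mu> t)" "\<bar>fst q - X t x w\<bar> < e"
    using X_tracked_by_msupp[OF assms(1) \<open>t \<ge> 0\<close> \<open>e > 0\<close>] by blast
  then show "\<bar>X t x w - xc t\<bar> \<le> D + e" using msupp_mu_close_xc[OF t] by fastforce
qed

lemma X_dist_le_D:
  assumes "(x, w) \<in> msupp (\<mu> 0)" and "(x', w') \<in> msupp (\<mu> 0)" and t: "t \<in> {0..ts}"
  shows "\<bar>X t x w - X t x' w'\<bar> \<le> D"
proof (rule field_le_epsilon)
  fix e :: real assume "e > 0"
  obtain q q' where "q \<in> msupp (\<mu> t)" "\<bar>fst q - X t x w\<bar> < e/2"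
    and "q' \<in> msupp (\<mu> t)" "\<bar>fst q' - X t x' w'\<bar> < e/2"
    using X_tracked_by_msupp[OF assms(1)] X_tracked_by_msupp[OF assms(2)] t \<open>e > 0\<close>
    by (metis atLeastAtMost_iff half_gt_zero)
  then show "\<bar>X t x w - X t x' w'\<bar> \<le> D + e" using diam[OF t, of q q'] by linarith
qed

subsection \<open>The centre of mass\<close>

lemma AE_mu_bounded:
  obtains R where "R \<ge> 1" and "\<And>t. t \<in> {0..ts} \<Longrightarrow> AE p in \<mu> t. \<bar>fst p\<bar> \<le> R \<and> \<bar>snd p\<bar> \<le> R"
proof -
  obtain x0 w0 where p0: "(x0, w0) \<in> msupp (\<mu> 0)"
    using msupp_nonempty[OF sets_mu prob_space_mu, of 0] by auto
  have "compact ((\<lambda>t. X t x0 w0) ` {0..ts})"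
    by (rule compact_continuous_image) (auto intro: continuous_on_subset[OF continuous_on_X])
  then obtain BX where "\<forall>t\<in>{0..ts}. norm (X t x0 w0) \<le> BX"
    by (meson bounded_iff compact_imp_bounded imageI)
  then have BX: "\<And>t. t \<in> {0..ts} \<Longrightarrow> \<bar>X t x0 w0\<bar> \<le> BX" by simp
  obtain B\<Omega> where B\<Omega>: "\<And>w. w \<in> \<Omega> \<Longrightarrow> \<bar>w\<bar> \<le> B\<Omega>" using nu(4) unfolding bounded_iff by auto
  define R where "R = max 1 (max (2*D + BX) B\<Omega>)"
  have "\<bar>fst p\<bar> \<le> R \<and> \<bar>snd p\<bar> \<le> R" if t: "t \<in> {0..ts}" and p: "p \<in> msupp (\<mu> t)" for t p
  proof
    have "\<bar>fst p\<bar> \<le> 2*D + BX"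
      using msupp_mu_close_xc[OF t p] X_close_xc[OF p0 t] BX[OF t] by arith
    then show "\<bar>fst p\<bar> \<le> R" unfolding R_def by linarith
    show "\<bar>snd p\<bar> \<le> R" using B\<Omega>[OF msupp_mu_snd[OF _ p]] t unfolding R_def by force
  qed
  then have "AE p in \<mu> t. \<bar>fst p\<bar> \<le> R \<and> \<bar>snd p\<bar> \<le> R" if "t \<in> {0..ts}" for t
    using AE_mu_msupp[of t] that by (auto elim!: AE_mp)
  moreover have "R \<ge> 1" unfolding R_def by simp
  ultimately show thesis using that by blast
qed

lemma AE_mu_squares:
  obtains c where "c \<ge> 1" and "\<And>t. t \<in> {0..ts} \<Longrightarrow> AE p in \<mu> t. (fst p)\<^sup>2 \<le> c - 1 \<and> (snd p)\<^sup>2 \<le> c - 1"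
proof -
  obtain R where "R \<ge> 1"
    and box: "\<And>t. t \<in> {0..ts} \<Longrightarrow> AE p in \<mu> t. \<bar>fst p\<bar> \<le> R \<and> \<bar>snd p\<bar> \<le> R"
    using AE_mu_bounded by blast
  have "AE p in \<mu> t. (fst p)\<^sup>2 \<le> (R\<^sup>2 + 1) - 1 \<and> (snd p)\<^sup>2 \<le> (R\<^sup>2 + 1) - 1" if "t \<in> {0..ts}" for t
    using box[OF that]
    by eventually_elim (use \<open>R \<ge> 1\<close> in \<open>simp add: abs_le_square_iff[symmetric]\<close>)
  then show thesis by (intro that[of "R\<^sup>2 + 1"]) auto
qed

definition mean_velocity :: "real \<Rightarrow> real" where
  "mean_velocity t = integral\<^sup>L (\<mu> t) (\<lambda>(y,v). F (\<mu> t) y v)"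

lemma measurable_F_mu:
  "P2nu \<nu> m \<Longrightarrow> t \<ge> 0 \<Longrightarrow> (\<lambda>(y,v). F m y v) \<in> borel_measurable (\<mu> t)"
  using measurable_continuous_sets_borel[OF sets_mu F_derivatives(4)] by blast

lemma integrable_F_mu:
  assumes "P2nu \<nu> m" and t: "t \<in> {0..ts}"
  shows "integrable (\<mu> t) (\<lambda>(y,v). F m y v)"
proof -
  obtain R where "R \<ge> 1" and box: "AE p in \<mu> t. \<bar>fst p\<bar> \<le> R \<and> \<bar>snd p\<bar> \<le> R"
    using AE_mu_bounded t by blast
  have "AE p in \<mu> t. \<bar>F m (fst p) (snd p)\<bar> \<le> \<bar>F m 0 0\<bar> + (\<kappa> * I + I) * R"
    using box
  proof eventually_elim
    case (elim p)
    have "\<kappa> * I * \<bar>fst p\<bar> \<le> \<kappa> * I * R" and "I * \<bar>snd p\<bar> \<le> I * R"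
      using elim pos by (auto intro: mult_left_mono)
    then show ?case using F_lipschitz[OF assms(1), of "fst p" "snd p" 0 0] by (simp add: algebra_simps)
  qed
  then show ?thesis
    using t by (intro integrable_bounded_continuous[OF prob_space_mu sets_mu F_derivatives(4)[OF assms(1)]])
       (auto simp: case_prod_beta)
qed

lemma xc_eq_integral_mean_velocity:
  assumes t: "t \<in> {0..ts}"
  shows "xc t = xc 0 + integral {0..t} mean_velocity"
proof -
  obtain c where "c \<ge> 1"
    and inside: "\<And>s. s \<in> {0..ts} \<Longrightarrow> AE p in \<mu> s. (fst p)\<^sup>2 \<le> c - 1 \<and> (snd p)\<^sup>2 \<le> c - 1"
    using AE_mu_squares by blast
  have test: "test_fun (moment_test c ts) (moment_test_dt c ts) (moment_test_dy c ts)"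
    using \<open>c \<ge> 1\<close> by (rule test_fun_moment_test)
  have moment: "integral\<^sup>L (\<mu> s) (\<lambda>(y,v). moment_test c ts s y v) = xc s" if s: "s \<in> {0..ts}" for s
    unfolding xc_def
  proof (rule integral_cong_AE)
    show "(\<lambda>(y,v). moment_test c ts s y v) \<in> borel_measurable (\<mu> s)"
      using s unfolding moment_test_def case_prod_beta
      by (intro measurable_continuous_sets_borel[OF sets_mu] continuous_intros) auto
    show "fst \<in> borel_measurable (\<mu> s)"
      using s by (intro measurable_continuous_sets_borel[OF sets_mu] continuous_intros) auto
    show "AE p in \<mu> s. (case p of (y,v) \<Rightarrow> moment_test c ts s y v) = fst p"
      using inside[OF s] by eventually_elim (use s moment_test_inside(1) in \<open>auto split: prod.split\<close>)
  qed
  have velocity: "integral\<^sup>L (\<mu> s)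
      (\<lambda>(y,v). moment_test_dt c ts s y v + F (\<mu> s) y v * moment_test_dy c ts s y v) = mean_velocity s"
    if s: "s \<in> {0..ts}" for s
    unfolding mean_velocity_def
  proof (rule integral_cong_AE)
    show "(\<lambda>(y,v). moment_test_dt c ts s y v + F (\<mu> s) y v * moment_test_dy c ts s y v)
        \<in> borel_measurable (\<mu> s)"
      using s P2nu_mu[of s] unfolding moment_test_dt_def moment_test_dy_def case_prod_beta
      by (intro measurable_continuous_sets_borel[OF sets_mu] continuous_intros) auto
    show "(\<lambda>(y,v). F (\<mu> s) y v) \<in> borel_measurable (\<mu> s)"
      using s P2nu_mu[of s] by (intro measurable_F_mu) auto
    show "AE p in \<mu> s. (case p of (y,v) \<Rightarrow> moment_test_dt c ts s y v + F (\<mu> s) y v * moment_test_dy c ts s y v)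
        = (case p of (y,v) \<Rightarrow> F (\<mu> s) y v)"
      using inside[OF s]
      by eventually_elim (use s moment_test_inside(2,3) in \<open>auto split: prod.split\<close>)
  qed
  have "integral {0..t} (\<lambda>s. integral\<^sup>L (\<mu> s)
      (\<lambda>(y,v). moment_test_dt c ts s y v + F (\<mu> s) y v * moment_test_dy c ts s y v))
    = integral {0..t} mean_velocity"
    using t velocity by (intro integral_cong) auto
  then show ?thesis
    using weak_formulation[OF test, of t] t moment[OF t] moment[of 0] ts by simp
qed

lemma continuous_on_integral_F_mu:
  assumes m: "P2nu \<nu> m"
  shows "continuous_on {0..ts} (\<lambda>s. integral\<^sup>L (\<mu> s) (\<lambda>(y,v). F m y v))"
proof -
  obtain c where "c \<ge> 1"
    and inside: "\<And>s. s \<in> {0..ts} \<Longrightarrow> AE p in \<mu> s. (fst p)\<^sup>2 \<le> c - 1 \<and> (snd p)\<^sup>2 \<le> c - 1"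
    using AE_mu_squares by blast
  define g where "g = (\<lambda>p::real\<times>real. F m (fst p) (snd p) * smooth_step (c - (fst p)\<^sup>2) * smooth_step (c - (snd p)\<^sup>2))"
  have g_cont: "continuous_on UNIV g" unfolding g_def by (intro continuous_intros m)
  have "eventually (\<lambda>p. g p = 0) at_infinity"
    unfolding eventually_at_infinity
  proof (intro exI[of _ "2*c"] allI impI)
    fix p :: "real \<times> real" assume "2 * c \<le> norm p"
    then have "c \<le> \<bar>fst p\<bar> \<or> c \<le> \<bar>snd p\<bar>" using norm_Pair_le[of "fst p" "snd p"] by (simp only: prod.collapse real_norm_def; linarith)
    moreover have "c \<le> z\<^sup>2" if "c \<le> \<bar>z\<bar>" for z :: real
      using mult_mono[of c "\<bar>z\<bar>" 1 "\<bar>z\<bar>"] that \<open>c \<ge> 1\<close> by (simp add: power2_eq_square)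
    ultimately have "c \<le> (fst p)\<^sup>2 \<or> c \<le> (snd p)\<^sup>2" by blast
    then show "g p = 0" unfolding g_def by (auto simp: smooth_step_nonpos)
  qed
  then have "(g \<longlongrightarrow> 0) at_infinity" by (rule tendsto_eventually)
  then have "continuous_on {0..} (\<lambda>s. integral\<^sup>L (\<mu> s) g)"
    using sol g_cont unfolding mv_solution_def by blast
  then have "continuous_on {0..ts} (\<lambda>s. integral\<^sup>L (\<mu> s) g)"
    by (rule continuous_on_subset) auto
  moreover have "integral\<^sup>L (\<mu> s) g = integral\<^sup>L (\<mu> s) (\<lambda>(y,v). F m y v)" if s: "s \<in> {0..ts}" for s
  proof (rule integral_cong_AE)
    show "g \<in> borel_measurable (\<mu> s)" using s by (intro measurable_continuous_sets_borel[OF sets_mu g_cont]) auto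
    show "(\<lambda>(y,v). F m y v) \<in> borel_measurable (\<mu> s)" using s by (intro measurable_F_mu[OF m]) auto
    show "AE p in \<mu> s. g p = (case p of (y,v) \<Rightarrow> F m y v)"
      using inside[OF s] by eventually_elim (simp add: g_def smooth_step_ge_1 case_prod_beta)
  qed
  ultimately show ?thesis by (rule continuous_on_cong[THEN iffD1, OF refl, rotated]) simp
qed

lemma mean_velocity_near_integral:
  assumes s: "s \<in> {0..ts}" and "t \<ge> 0" and "W1 (\<mu> s) (\<mu> t) \<le> ennreal e" and "e \<ge> 0"
  shows "\<bar>mean_velocity s - integral\<^sup>L (\<mu> s) (\<lambda>(y,v). F (\<mu> t) y v)\<bar> \<le> \<kappa> * M * e"
proof -
  have "s \<ge> 0" using s by simp
  have "mean_velocity s - integral\<^sup>L (\<mu> s) (\<lambda>(y,v). F (\<mu> t) y v)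
      = integral\<^sup>L (\<mu> s) (\<lambda>p. F (\<mu> s) (fst p) (snd p) - F (\<mu> t) (fst p) (snd p))"
    unfolding mean_velocity_def
    using Bochner_Integration.integral_diff[OF integrable_F_mu[OF P2nu_mu[OF \<open>s \<ge> 0\<close>] s]
        integrable_F_mu[OF P2nu_mu[OF \<open>t \<ge> 0\<close>] s]]
    by (simp add: case_prod_beta)
  also have "\<bar>\<dots>\<bar> \<le> \<kappa> * M * e"
  proof (rule abs_integral_le_AE[OF prob_space_mu[OF \<open>s \<ge> 0\<close>]])
    show "AE p in \<mu> s. \<bar>F (\<mu> s) (fst p) (snd p) - F (\<mu> t) (fst p) (snd p)\<bar> \<le> \<kappa> * M * e"
      using AE_mu_msupp[OF \<open>s \<ge> 0\<close>]
      by eventually_elim (intro F_diff_le_W1[OF P2nu_mu[OF \<open>s \<ge> 0\<close>] P2nu_mu[OF \<open>t \<ge> 0\<close>] assms(3,4)], simp)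
  qed
  finally show ?thesis .
qed

lemma continuous_on_mean_velocity: "continuous_on {0..ts} mean_velocity"
  unfolding continuous_on_def
proof (intro ballI tendstoI)
  fix t e :: real assume t: "t \<in> {0..ts}" and "e > 0"
  then have "t \<ge> 0" by simp
  have "\<kappa> * M > 0" using pos by simp
  have "eventually (\<lambda>s. s \<ge> 0 \<and> W1 (\<mu> s) (\<mu> t) \<le> ennreal (e / (4 * (\<kappa> * M)))) (at t within {0..ts})"
    by (rule filter_leD[OF at_le eventually_W1_mu_le[OF \<open>t \<ge> 0\<close>]]) (use \<open>e > 0\<close> \<open>\<kappa> * M > 0\<close> in auto)
  moreover have "eventually (\<lambda>s. dist (integral\<^sup>L (\<mu> s) (\<lambda>(y,v). F (\<mu> t) y v)) (mean_velocity t) < e/2)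
      (at t within {0..ts})"
  proof (rule tendstoD)
    show "((\<lambda>s. integral\<^sup>L (\<mu> s) (\<lambda>(y,v). F (\<mu> t) y v)) \<longlongrightarrow> mean_velocity t) (at t within {0..ts})"
      using continuous_on_integral_F_mu[OF P2nu_mu[OF \<open>t \<ge> 0\<close>]] t
      unfolding continuous_on_def mean_velocity_def by blast
  qed (use \<open>e > 0\<close> in simp)
  moreover have "eventually (\<lambda>s. s \<in> {0..ts}) (at t within {0..ts})"
    by (simp add: eventually_at_filter)
  ultimately show "eventually (\<lambda>s. dist (mean_velocity s) (mean_velocity t) < e) (at t within {0..ts})"
  proof eventually_elim
    case (elim s)
    have "\<bar>mean_velocity s - integral\<^sup>L (\<mu> s) (\<lambda>(y,v). F (\<mu> t) y v)\<bar> \<le> \<kappa> * M * (e / (4 * (\<kappa> * M)))"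
      using elim \<open>e > 0\<close> \<open>\<kappa> * M > 0\<close> by (intro mean_velocity_near_integral[OF _ \<open>t \<ge> 0\<close>]) auto
    also have "\<dots> = e / 4" using pos by (simp add: field_simps)
    finally show ?case using elim(2) unfolding dist_real_def by linarith
  qed
qed


definition centre_velocity :: "real \<Rightarrow> real" where
  "centre_velocity t = F (mu_tilde t) (xc t) \<omega>c"

lemma F_close_centre_velocity:
  assumes t: "t \<in> {0..ts}" and p: "p \<in> msupp (\<mu> t)"
  shows "\<bar>F (\<mu> t) (fst p) (snd p) - centre_velocity t\<bar> \<le> \<kappa> * M * D + \<kappa> * I * D + I * \<gamma>"
proof -
  have "t \<ge> 0" using t by simp
  have "snd p \<in> \<Omega>" by (rule msupp_mu_snd[OF \<open>t \<ge> 0\<close> p])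
  have "\<bar>F (\<mu> t) (fst p) (snd p) - F (mu_tilde t) (fst p) (snd p)\<bar> \<le> \<kappa> * M * D"
    using D by (intro F_diff_le_W1[OF P2nu_mu[OF \<open>t \<ge> 0\<close>] P2nu_mu_tilde W1_mu_mu_tilde[OF t]
        _ \<open>snd p \<in> \<Omega>\<close>]) simp
  moreover have "\<bar>F (mu_tilde t) (fst p) (snd p) - F (mu_tilde t) (xc t) \<omega>c\<bar>
      \<le> \<kappa> * I * \<bar>fst p - xc t\<bar> + I * \<bar>snd p - \<omega>c\<bar>"
    by (rule F_lipschitz[OF P2nu_mu_tilde])
  moreover have "\<kappa> * I * \<bar>fst p - xc t\<bar> \<le> \<kappa> * I * D"
    using msupp_mu_close_xc[OF t p] pos by (intro mult_left_mono) auto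
  moreover have "I * \<bar>snd p - \<omega>c\<bar> \<le> I * \<gamma>"
    using omega_c_close[OF \<open>snd p \<in> \<Omega>\<close>] pos by (intro mult_left_mono) auto
  ultimately show ?thesis unfolding centre_velocity_def by linarith
qed

lemma mean_velocity_close:
  assumes t: "t \<in> {0..ts}"
  shows "\<bar>mean_velocity t - centre_velocity t\<bar> \<le> ((\<kappa> + 1) * I + \<kappa> * M) * D + I * \<gamma>"
proof -
  have "t \<ge> 0" using t by simp
  interpret prob_space "\<mu> t" by (rule prob_space_mu[OF \<open>t \<ge> 0\<close>])
  have "mean_velocity t - centre_velocity t
      = integral\<^sup>L (\<mu> t) (\<lambda>p. F (\<mu> t) (fst p) (snd p) - centre_velocity t)"
    using integrable_F_mu[OF P2nu_mu[OF \<open>t \<ge> 0\<close>] t]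
    unfolding mean_velocity_def case_prod_beta' by (simp add: prob_space)
  also have "\<bar>\<dots>\<bar> \<le> \<kappa> * M * D + \<kappa> * I * D + I * \<gamma>"
  proof (rule abs_integral_le_AE[OF prob_space_mu[OF \<open>t \<ge> 0\<close>]])
    show "AE p in \<mu> t. \<bar>F (\<mu> t) (fst p) (snd p) - centre_velocity t\<bar> \<le> \<kappa> * M * D + \<kappa> * I * D + I * \<gamma>"
      using AE_mu_msupp[OF \<open>t \<ge> 0\<close>] by eventually_elim (simp add: F_close_centre_velocity[OF t])
  qed
  also have "\<dots> \<le> ((\<kappa> + 1) * I + \<kappa> * M) * D + I * \<gamma>"
    using pos D by (simp add: algebra_simps)
  finally show ?thesis .
qed

lemma mean_velocity_pos:
  assumes "t \<in> {0..ts}" shows "mean_velocity t > 0"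
  using mean_velocity_close[OF assms] A4[of "xc t"] D unfolding centre_velocity_def mu_tilde_def
  by linarith

lemma xc_has_real_derivative_within:
  assumes "t \<in> {0..ts}"
  shows "(xc has_real_derivative mean_velocity t) (at t within {0..ts})"
proof -
  have "((\<lambda>u. integral {0..u} mean_velocity) has_real_derivative mean_velocity t) (at t within {0..ts})"
    using integral_has_vector_derivative[OF continuous_on_mean_velocity assms]
    by (simp add: has_real_derivative_iff_has_vector_derivative)
  then have "((\<lambda>u. xc 0 + integral {0..u} mean_velocity) has_real_derivative 0 + mean_velocity t)
      (at t within {0..ts})"
    by (intro DERIV_add DERIV_const)
  then have "((\<lambda>u. xc 0 + integral {0..u} mean_velocity) has_real_derivative mean_velocity t)
      (at t within {0..ts})"
    by simp
  then show ?thesis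
  proof (rule has_field_derivative_transform_within[where d=1, OF _ _ assms])
    show "xc 0 + integral {0..u} mean_velocity = xc u" if "u \<in> {0..ts}" for u
      by (rule sym[OF xc_eq_integral_mean_velocity[OF that]])
  qed simp
qed

lemma continuous_on_xc: "continuous_on {0..ts} xc"
  unfolding continuous_on_eq_continuous_within
  using xc_has_real_derivative_within DERIV_continuous by blast

lemma xc_has_real_derivative:
  assumes "t \<in> {0<..<ts}"
  shows "(xc has_real_derivative mean_velocity t) (at t)"
  using xc_has_real_derivative_within[of t] assms at_within_interior[of t "{0..ts}"] by auto

lemma xc_strict_mono: "strict_mono_on {0..ts} xc"
proof (rule strict_mono_onI)
  fix u v assume "u \<in> {0..ts}" "v \<in> {0..ts}" "u < v"
  show "xc u < xc v"
  proof (rule DERIV_pos_imp_increasing_open[OF \<open>u < v\<close>])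
    fix t assume "u < t" "t < v"
    then have "t \<in> {0<..<ts}" using \<open>u \<in> {0..ts}\<close> \<open>v \<in> {0..ts}\<close> by auto
    then show "\<exists>y. (xc has_real_derivative y) (at t) \<and> 0 < y"
      using xc_has_real_derivative mean_velocity_pos by force
  qed (use continuous_on_subset[OF continuous_on_xc] \<open>u \<in> {0..ts}\<close> \<open>v \<in> {0..ts}\<close> in auto)
qed

lemma xc_image: "xc ` {0..ts} = {xc 0..xc ts}"
proof
  show "xc ` {0..ts} \<subseteq> {xc 0..xc ts}"
  proof (rule image_subsetI)
    fix u assume "u \<in> {0..ts}"
    then show "xc u \<in> {xc 0..xc ts}" using strict_mono_on_leD[OF xc_strict_mono] ts by simp
  qed
  show "{xc 0..xc ts} \<subseteq> xc ` {0..ts}"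
  proof
    fix y assume "y \<in> {xc 0..xc ts}"
    then obtain u where "0 \<le> u" "u \<le> ts" "xc u = y"
      using IVT'[of xc 0 y ts] continuous_on_xc ts by auto
    then show "y \<in> xc ` {0..ts}" by auto
  qed
qed

lemma inverse_xc:
  assumes s: "s \<in> {xc 0<..<xc ts}"
  defines "\<tau> \<equiv> the_inv_into {0..ts} xc"
  shows "\<tau> s \<in> {0<..<ts}" and "xc (\<tau> s) = s"
    and "(\<tau> has_real_derivative inverse (mean_velocity (\<tau> s))) (at s)"
proof -
  have inj: "inj_on xc {0..ts}" by (rule strict_mono_on_imp_inj_on[OF xc_strict_mono])
  have xc_\<tau>: "xc (\<tau> r) = r" if "r \<in> {xc 0..xc ts}" for r
    unfolding \<tau>_def by (rule f_the_inv_into_f[OF inj]) (use that xc_image in auto)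
  have "\<tau> s \<in> {0..ts}"
    unfolding \<tau>_def by (rule the_inv_into_into[OF inj]) (use s xc_image in auto)
  moreover have "\<tau> s \<noteq> 0" "\<tau> s \<noteq> ts" using xc_\<tau>[of s] s by auto
  ultimately show "\<tau> s \<in> {0<..<ts}" by auto
  show "xc (\<tau> s) = s" using xc_\<tau> s by auto
  show "(\<tau> has_real_derivative inverse (mean_velocity (\<tau> s))) (at s)"
  proof (rule DERIV_inverse_function[where f=xc and a="xc 0" and b="xc ts"])
    show "(xc has_real_derivative mean_velocity (\<tau> s)) (at (\<tau> s))"
      by (rule xc_has_real_derivative[OF \<open>\<tau> s \<in> {0<..<ts}\<close>])
    show "mean_velocity (\<tau> s) \<noteq> 0" using mean_velocity_pos \<open>\<tau> s \<in> {0..ts}\<close> by force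
    show "xc 0 < s" "s < xc ts" using s by auto
    show "xc (\<tau> y) = y" if "xc 0 < y" "y < xc ts" for y using xc_\<tau> that by auto
    have "continuous_on {xc 0..xc ts} \<tau>"
      using continuous_on_inv_into[OF continuous_on_xc compact_Icc inj] unfolding \<tau>_def xc_image .
    then show "isCont \<tau> s" by (rule continuous_on_interior) (use s in simp)
  qed
qed

subsection \<open>Relative velocity of two characteristics\<close>

lemma F_linearisation:
  assumes m: "P2nu \<nu> m" and y: "\<bar>y - c\<bar> \<le> R" and y': "\<bar>y' - c\<bar> \<le> R"
  shows "\<bar>(F m y v - Fx F m c v * y) - (F m y' v - Fx F m c v * y')\<bar> \<le> \<kappa> * I * R * \<bar>y - y'\<bar>"
proof -
  have "((\<lambda>z. F m z v - Fx F m c v * z) has_real_derivative Fx F m z v - Fx F m c v) (at z within cball c R)"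
    for z
    by (rule has_field_derivative_at_within) (auto intro!: derivative_eq_intros F_derivatives(1)[OF m])
  moreover have "\<bar>Fx F m z v - Fx F m c v\<bar> \<le> \<kappa> * I * R" if "z \<in> cball c R" for z
  proof -
    have "\<bar>Fx F m z v - Fx F m c v\<bar> \<le> \<kappa> * I * \<bar>z - c\<bar>" by (rule Fx_lipschitz_x[OF m])
    also have "\<dots> \<le> \<kappa> * I * R"
      using that pos by (intro mult_left_mono) (auto simp: dist_real_def abs_minus_commute)
    finally show ?thesis .
  qed
  ultimately show ?thesis
    using y y' field_differentiable_bound[of "cball c R" "\<lambda>z. F m z v - Fx F m c v * z"
        "\<lambda>z. Fx F m z v - Fx F m c v" "\<kappa> * I * R" y y']
    by (simp add: dist_real_def abs_minus_commute)
qed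

text \<open>Comparing \<open>\<mu>\<^sub>t\<close> with \<open>\<delta>\<^bsub>x\<^sub>c\<^esub> \<otimes> \<nu>\<close> costs \<open>\<kappa>MD\<close> per unit of distance (by (A1) for \<open>\<partial>\<^sub>xF\<close>), and
  linearising \<open>F[\<delta>\<^bsub>x\<^sub>c\<^esub> \<otimes> \<nu>]\<close> at \<open>x\<^sub>c\<close> costs \<open>\<kappa>ID\<close>; the frequencies \<open>w, w'\<close> are compared with
  \<open>\<omega>\<^sub>c\<close> through an intermediate \<open>u \<in> \<Omega>\<close>.\<close>

lemma velocity_difference_bound_via:
  assumes t: "t \<in> {0..ts}" and y: "\<bar>y - xc t\<bar> \<le> D" and y': "\<bar>y' - xc t\<bar> \<le> D" and "u \<in> \<Omega>"
  shows "F (\<mu> t) y w - F (\<mu> t) y' w' - Fx F (mu_tilde t) (xc t) \<omega>c * (y - y')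
    \<le> I * \<bar>w - u\<bar> + I * \<bar>w' - u\<bar> + 2 * (I * \<bar>u - \<omega>c\<bar>) + \<kappa> * (M + I) * D * \<bar>y - y'\<bar>"
proof -
  have "t \<ge> 0" using t by simp
  note m = P2nu_mu[OF \<open>t \<ge> 0\<close>] and m' = P2nu_mu_tilde[of t]
  define b where "b = Fx F (mu_tilde t) (xc t) \<omega>c"
  have w_route: "\<bar>F (\<mu> t) y w - F (\<mu> t) y u\<bar> \<le> I * \<bar>w - u\<bar>"
    and w'_route: "\<bar>F (\<mu> t) y' u - F (\<mu> t) y' w'\<bar> \<le> I * \<bar>w' - u\<bar>"
    using F_lipschitz_w[OF m, of y w u] F_lipschitz_w[OF m, of y' u w'] by (simp_all add: abs_minus_commute)
  have "((\<lambda>z. F (\<mu> t) z u - F (mu_tilde t) z u) has_real_derivative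
      Fx F (\<mu> t) z u - Fx F (mu_tilde t) z u) (at z)" for z
    by (intro DERIV_diff F_derivatives(1)[OF m] F_derivatives(1)[OF m'])
  moreover have "\<bar>Fx F (\<mu> t) z u - Fx F (mu_tilde t) z u\<bar> \<le> \<kappa> * M * D" for z
    using D by (intro Fx_diff_le_W1[OF m m' W1_mu_mu_tilde[OF t] _ \<open>u \<in> \<Omega>\<close>]) simp
  ultimately have kernel_route: "\<bar>(F (\<mu> t) y u - F (mu_tilde t) y u) - (F (\<mu> t) y' u - F (mu_tilde t) y' u)\<bar>
      \<le> \<kappa> * M * D * \<bar>y - y'\<bar>"
    using field_differentiable_bound[of UNIV "\<lambda>z. F (\<mu> t) z u - F (mu_tilde t) z u"
        "\<lambda>z. Fx F (\<mu> t) z u - Fx F (mu_tilde t) z u" "\<kappa> * M * D" y y'] by simp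
  have centre_route: "\<bar>(F (mu_tilde t) y u - F (mu_tilde t) y \<omega>c) - (F (mu_tilde t) y' u - F (mu_tilde t) y' \<omega>c)\<bar>
      \<le> 2 * (I * \<bar>u - \<omega>c\<bar>)"
    using F_lipschitz_w[OF m', of y u \<omega>c] F_lipschitz_w[OF m', of y' u \<omega>c] by linarith
  have linearisation:
      "\<bar>(F (mu_tilde t) y \<omega>c - b * y) - (F (mu_tilde t) y' \<omega>c - b * y')\<bar> \<le> \<kappa> * I * D * \<bar>y - y'\<bar>"
    unfolding b_def by (rule F_linearisation[OF m' y y'])
  show ?thesis
    using w_route w'_route kernel_route centre_route linearisation unfolding b_def
    by (simp add: algebra_simps abs_le_iff)
qed

lemma velocity_difference_bound:
  assumes t: "t \<in> {0..ts}" and xw: "(x, w) \<in> msupp (\<mu> 0)" and xw': "(x', w') \<in> msupp (\<mu> 0)"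
  shows "F (\<mu> t) (X t x w) w - F (\<mu> t) (X t x' w') w'
      - Fx F (mu_tilde t) (xc t) \<omega>c * (X t x w - X t x' w') \<le> C1const \<kappa> M I \<gamma> D"
proof -
  have "w \<in> \<Omega>" "w' \<in> \<Omega>" using msupp_mu_snd[of 0] xw xw' by force+
  obtain u where u: "u = w \<or> u = w'" "\<bar>u - \<omega>c\<bar> \<le> \<bar>w - \<omega>c\<bar>" "\<bar>u - \<omega>c\<bar> \<le> \<bar>w' - \<omega>c\<bar>"
    by (cases "\<bar>w - \<omega>c\<bar> \<le> \<bar>w' - \<omega>c\<bar>") auto
  then have "u \<in> \<Omega>" using \<open>w \<in> \<Omega>\<close> \<open>w' \<in> \<Omega>\<close> by auto
  have "\<bar>w - u\<bar> + \<bar>w' - u\<bar> + 2 * \<bar>u - \<omega>c\<bar> \<le> 2 * \<gamma>"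
    using Omega_diam[OF \<open>w \<in> \<Omega>\<close> \<open>w' \<in> \<Omega>\<close>] omega_c_close[OF \<open>w \<in> \<Omega>\<close>] omega_c_close[OF \<open>w' \<in> \<Omega>\<close>] u
    by (auto simp: abs_if split: if_splits)
  then have "I * (\<bar>w - u\<bar> + \<bar>w' - u\<bar> + 2 * \<bar>u - \<omega>c\<bar>) \<le> I * (2 * \<gamma>)"
    using pos by (intro mult_left_mono) auto
  then have "I * \<bar>w - u\<bar> + I * \<bar>w' - u\<bar> + 2 * (I * \<bar>u - \<omega>c\<bar>) \<le> 2 * I * \<gamma>"
    by (simp add: algebra_simps)
  moreover have "\<kappa> * (M + I) * D * \<bar>X t x w - X t x' w'\<bar> \<le> \<kappa> * (M + I) * D * D"
    using X_dist_le_D[OF xw xw' t] pos D by (intro mult_left_mono) auto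
  ultimately show ?thesis
    using velocity_difference_bound_via[OF t X_close_xc[OF xw t] X_close_xc[OF xw' t] \<open>u \<in> \<Omega>\<close>, of w w']
    unfolding C1const_def by (simp add: power2_eq_square)
qed

lemma characteristic_gap_derivative:
  assumes s: "s \<in> {xc 0<..<xc ts}" and xw: "(x, w) \<in> msupp (\<mu> 0)" and xw': "(x', w') \<in> msupp (\<mu> 0)"
  defines "\<tau> \<equiv> the_inv_into {0..ts} xc"
  shows "\<exists>d. ((\<lambda>r. X (\<tau> r) x w - X (\<tau> r) x' w') has_real_derivative d) (at s)
    \<and> d \<le> Fx F (mu_tilde (\<tau> s)) (xc (\<tau> s)) \<omega>c / F (mu_tilde (\<tau> s)) (xc (\<tau> s)) \<omega>c
            * (X (\<tau> s) x w - X (\<tau> s) x' w') + C2const A \<kappa> M I \<gamma> D"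
proof -
  define t where "t = \<tau> s"
  have t: "t \<in> {0<..<ts}" and "t \<in> {0..ts}" using inverse_xc(1)[OF s] unfolding t_def \<tau>_def by auto
  have X_deriv: "((\<lambda>t. X t y v) has_real_derivative F (\<mu> t) (X t y v) v) (at (\<tau> s))" for y v
    using flow[of t y v] t at_within_interior[of t "{0..}"] unfolding t_def by auto
  have "((\<lambda>r. X (\<tau> r) y v) has_real_derivative F (\<mu> t) (X t y v) v * inverse (mean_velocity t)) (at s)" for y v
    using DERIV_chain2[OF X_deriv inverse_xc(3)[OF s, folded \<tau>_def]] unfolding t_def by simp
  then have "((\<lambda>r. X (\<tau> r) x w - X (\<tau> r) x' w') has_real_derivative
      (F (\<mu> t) (X t x w) w - F (\<mu> t) (X t x' w') w') / mean_velocity t) (at s)"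
    using DERIV_diff by (fastforce simp: divide_inverse left_diff_distrib)
  moreover have "(F (\<mu> t) (X t x w) w - F (\<mu> t) (X t x' w') w') / mean_velocity t
      \<le> Fx F (mu_tilde t) (xc t) \<omega>c / centre_velocity t * (X t x w - X t x' w')
        + (C1const \<kappa> M I \<gamma> D / A + (((\<kappa> + 1) * I + \<kappa> * M) * D + I * \<gamma>)
          * (\<kappa> * I * D + C1const \<kappa> M I \<gamma> D) / (A * (A - (((\<kappa> + 1) * I + \<kappa> * M) * D + I * \<gamma>))))"
    using \<open>t \<in> {0..ts}\<close> A4[of "xc t"] D pos gamma_nonneg
    by (intro quotient_perturbation_bound mean_velocity_pos mean_velocity_close velocity_difference_bound
        A2_x P2nu_mu_tilde X_dist_le_D xw xw')
       (auto simp: centre_velocity_def mu_tilde_def C1const_def)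
  ultimately show ?thesis
    unfolding C2const_def centre_velocity_def t_def by (auto simp: algebra_simps)
qed

end

theorem lemma4p2:
  fixes \<nu> :: "real measure"
    and F :: "(real \<times> real) measure \<Rightarrow> real \<Rightarrow> real \<Rightarrow> real"
    and \<mu> :: "real \<Rightarrow> (real \<times> real) measure"
    and X :: "real \<Rightarrow> real \<Rightarrow> real \<Rightarrow> real"
    and A B I M \<kappa> D t\<^sub>s :: real
  defines "\<Omega> \<equiv> msupp \<nu>"
    and "\<gamma> \<equiv> diameter (msupp \<nu>)"
    and "\<omega>\<^sub>c \<equiv> integral\<^sup>L \<nu> (\<lambda>w. w)"
    and "x\<^sub>c \<equiv> (\<lambda>t. integral\<^sup>L (\<mu> t) fst)"
  assumes nu: "prob_space \<nu>" "sets \<nu> = sets borel" "integrable \<nu> (\<lambda>w. w\<^sup>2)" "bounded \<Omega>"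
    and pos: "A > 0" "B > 0" "I > 0" "M > 0" "\<kappa> > 0"
    and A1_0: "\<And>\<mu>1 \<mu>2 x w. P2nu \<nu> \<mu>1 \<Longrightarrow> P2nu \<nu> \<mu>2 \<Longrightarrow> w \<in> \<Omega> \<Longrightarrow>
                 ennreal \<bar>F \<mu>1 x w - F \<mu>2 x w\<bar> \<le> ennreal (\<kappa> * M) * W1 \<mu>1 \<mu>2"
    and A1_1: "\<And>\<mu>1 \<mu>2 x w. P2nu \<nu> \<mu>1 \<Longrightarrow> P2nu \<nu> \<mu>2 \<Longrightarrow> w \<in> \<Omega> \<Longrightarrow>
                 ennreal \<bar>Fx F \<mu>1 x w - Fx F \<mu>2 x w\<bar> \<le> ennreal (\<kappa> * M) * W1 \<mu>1 \<mu>2"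
    and A2_C2: "\<And>\<mu>1. P2nu \<nu> \<mu>1 \<Longrightarrow> C2_R2 (F \<mu>1)"
    and A2_x: "\<And>\<mu>1 x w. P2nu \<nu> \<mu>1 \<Longrightarrow> \<bar>Fx F \<mu>1 x w\<bar> \<le> \<kappa> * I"
    and A2_xx: "\<And>\<mu>1 x w. P2nu \<nu> \<mu>1 \<Longrightarrow> \<bar>Fxx F \<mu>1 x w\<bar> \<le> \<kappa> * I"
    and A2_w: "\<And>\<mu>1 x w. P2nu \<nu> \<mu>1 \<Longrightarrow> \<bar>Fw F \<mu>1 x w\<bar> \<le> I"
    and A3: "\<And>\<mu>1 x w. P2nu \<nu> \<mu>1 \<Longrightarrow>
               F (distr \<mu>1 borel (\<lambda>(y,v). (y + 2 * pi, v))) (x + 2 * pi) w = F \<mu>1 x w"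
    and A4: "\<And>x. F (return borel x \<Otimes>\<^sub>M \<nu>) x \<omega>\<^sub>c \<ge> A"
    and A5: "integral {0..2 * pi}
               (\<lambda>x. Fx F (return borel x \<Otimes>\<^sub>M \<nu>) x \<omega>\<^sub>c / F (return borel x \<Otimes>\<^sub>M \<nu>) x \<omega>\<^sub>c)
             \<le> - \<kappa> * B"
    and D: "D > 0" "A - ((\<kappa> + 1) * I + \<kappa> * M) * D - I * \<gamma> > 0"
    and sol: "mv_solution \<nu> F \<mu>"
    and ts: "t\<^sub>s > 0"
    and diam: "\<And>t p q. t \<in> {0..t\<^sub>s} \<Longrightarrow> p \<in> msupp (\<mu> t) \<Longrightarrow> q \<in> msupp (\<mu> t) \<Longrightarrow>
                 \<bar>fst p - fst q\<bar> \<le> D"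
    and flow: "\<And>t x w. t \<ge> 0 \<Longrightarrow>
                 ((\<lambda>t. X t x w) has_real_derivative F (\<mu> t) (X t x w) w) (at t within {0..})"
    and flow0: "\<And>x w. X 0 x w = x"
  shows "\<forall>s \<in> {x\<^sub>c 0 <..< x\<^sub>c t\<^sub>s}. \<forall>(x, w) \<in> msupp (\<mu> 0). \<forall>(x', w') \<in> msupp (\<mu> 0).
           (let \<tau> = the_inv_into {0..t\<^sub>s} x\<^sub>c; t = \<tau> s;
                \<mu>t = return borel (x\<^sub>c t) \<Otimes>\<^sub>M \<nu> in
            \<exists>d. ((\<lambda>r. X (\<tau> r) x w - X (\<tau> r) x' w') has_real_derivative d) (at s)
              \<and> d \<le> Fx F \<mu>t (x\<^sub>c t) \<omega>\<^sub>c / F \<mu>t (x\<^sub>c t) \<omega>\<^sub>c * (X t x w - X t x' w')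
                     + C2const A \<kappa> M I \<gamma> D)"
proof -
  interpret mv_flow \<nu> F \<mu> X A I M \<kappa> D t\<^sub>s \<Omega> \<gamma> \<omega>\<^sub>c x\<^sub>c
    by (rule mv_flow.intro) (fact assms(1-4)[THEN meta_eq_to_obj_eq] assms)+
  show ?thesis
    unfolding Let_def using characteristic_gap_derivative[unfolded mu_tilde_def] by blast
qed

end
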